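(* In the setting described in the context, assume moreover that there is $\beta$ with $0<\beta<\alpha$ such that for every $\delta>0$ there is a constant $c_\delta$ with $|\frac{\partial}{\partial x}u^\epsilon(x,t)|\leq c_\delta\,\epsilon^{-\beta}$ for all $x\in\mathbb{R}$, $t\in[0,\delta]$, $\epsilon\in(0,1)$. Then the family $(u^\epsilon,v^\epsilon)$ is a weak asymptotic method for the equation $\frac{\partial v}{\partial t}+\frac{\partial}{\partial x}(uv)=0$, i.e. for every $\psi\in\mathcal{C}^\infty(\mathbb{R})$ with compact support and every $t\geq0$, $$\int_{\mathbb{R}}\Big[\frac{\partial v^\epsilon}{\partial t}(x,t)\psi(x)-u^\epsilon(x,t)v^\epsilon(x,t)\psi'(x)\Big]dx\longrightarrow 0\quad(\epsilon\to0).$$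
   Context: Let $\mathcal{C}_b(\mathbb{R})$ denote the Banach space of bounded continuous real functions on $\mathbb{R}$ with the sup norm. For a real function $u$ set $u^+=\max(0,u)$, $u^-=\max(0,-u)$. For $0<\epsilon<1$ let $u^\epsilon:\mathbb{R}\times[0,\infty)\to\mathbb{R}$ be $2\pi$-periodic in $x$, differentiable in $x$, with $t\mapsto u^\epsilon(\cdot,t)$ continuous from $[0,\infty)$ into $\mathcal{C}_b(\mathbb{R})$, and assume there is $M_1>0$ with $|u^\epsilon(x,t)|\leq M_1$ for all $\epsilon,x,t\ge0$. Let $v_0^\epsilon\in\mathcal{C}_b(\mathbb{R})$ be $2\pi$-periodic with $\sup_{\epsilon}\int_{-\pi}^{\pi}|v_0^\epsilon|dx<\infty$. Let $X^\epsilon$ be the unique global $\mathcal{C}^1$ solution $[0,\infty)\to\mathcal{C}_b(\mathbb{R})$ of $$\frac{d}{dt}X^\epsilon(x,t)=\frac{1}{\epsilon}\big[X^\epsilon(x-\epsilon,t)u^{\epsilon+}(x-\epsilon,t)-X^\epsilon(x,t)|u^{\epsilon}(x,t)|+X^\epsilon(x+\epsilon,t)u^{\epsilon-}(x+\epsilon,t)\big],\quad X^\epsilon(x,0)=v_0^\epsilon(x).$$ Let $\phi\in\mathcal{C}^\infty(\mathbb{R})$ have compact support with $\int\phi=1$, let $\alpha\in]0,1]$, $\phi_{\epsilon^\alpha}(x)=\epsilon^{-\alpha}\phi(x/\epsilon^\alpha)$, and define $v^\epsilon(x,t)=(X^\epsilon(\cdot,t)*\phi_{\epsilon^\alpha})(x)$.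 *)

theory Defs
  imports "HOL-Analysis.Analysis"
begin

definition smooth_fun :: "(real \<Rightarrow> real) \<Rightarrow> bool" where
  "smooth_fun f \<longleftrightarrow> (\<exists>D :: nat \<Rightarrow> real \<Rightarrow> real. D 0 = f \<and>
      (\<forall>n x. (D n has_real_derivative D (Suc n) x) (at x)))"

definition compact_supp :: "(real \<Rightarrow> real) \<Rightarrow> bool" where
  "compact_supp f \<longleftrightarrow> compact (closure {x. f x \<noteq> 0})"

definition mollifier :: "real \<Rightarrow> (real \<Rightarrow> real) \<Rightarrow> real \<Rightarrow> real" where
  "mollifier a phi x = phi (x / a) / a"

definition conv :: "(real \<Rightarrow> real) \<Rightarrow> (real \<Rightarrow> real) \<Rightarrow> real \<Rightarrow> real" where
  "conv f g x = integral UNIV (\<lambda>y. f y * g (x - y))"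

definition vfam :: "(real \<Rightarrow> real \<Rightarrow> (real \<Rightarrow>\<^sub>C real)) \<Rightarrow> (real \<Rightarrow> real) \<Rightarrow> real
    \<Rightarrow> real \<Rightarrow> real \<Rightarrow> real \<Rightarrow> real" where
  "vfam X phi alpha e x t = conv (\<lambda>y. X e t y) (mollifier (e powr alpha) phi) x"

end

theory Submission
  imports Defs
begin

text \<open>
  The lattice equation is an upwind scheme. It keeps each \<open>X \<epsilon> t\<close> \<open>2\<pi>\<close>-periodic (Gronwall
  applied to the difference with a shifted copy) and does not increase its \<open>L\<^sup>1\<close> norm over a
  period: an explicit Euler step of length at most \<open>\<epsilon> / M1\<close> is a combination of shifted
  copies with nonnegative weights, so the mass it removes from a point reappears at a neighbour.
  Testing the mollified equation against \<open>\<psi>\<close> and moving the lattice shifts onto \<open>\<psi>\<close>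
  (discrete summation by parts) turns the residual into a convolution of \<open>X \<epsilon> t\<close> against a
  kernel whose size is the difference-quotient error \<open>O(\<epsilon>)\<close> plus the oscillation
  \<open>O(\<epsilon> powr (\<alpha> - \<beta>))\<close> of \<open>u \<epsilon> t\<close> over the support of the mollifier. The uniform
  \<open>L\<^sup>1\<close> bound controls both, so the residual is \<open>O(\<epsilon> powr (\<alpha> - \<beta>) + \<epsilon>)\<close>.
\<close>

section \<open>Integrals over intervals and periods\<close>

lemma integral_Icc_shift:
  fixes f :: "real \<Rightarrow> 'a::real_normed_vector"
  shows "integral {a..b} (\<lambda>x. f (x + c)) = integral {a+c..b+c} f"
  using integral_shift_real_ivl[where a="a+c" and b="b+c" and c=c and f=f] by simp

lemma integral_UNIV_eq_Icc:
  fixes f :: "real \<Rightarrow> real"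
  assumes "\<And>x. x \<notin> {a..b} \<Longrightarrow> f x = 0"
  shows "integral UNIV f = integral {a..b} f"
proof -
  have "f = (\<lambda>x. if x \<in> {a..b} then f x else 0)" using assms by auto
  then have "integral UNIV f = integral UNIV (\<lambda>x. if x \<in> {a..b} then f x else 0)" by simp
  also have "\<dots> = integral {a..b} f" by (rule integral_restrict_UNIV)
  finally show ?thesis .
qed

lemma integral_Icc_eq_superset:
  fixes f :: "real \<Rightarrow> real"
  assumes sub: "{a..b} \<subseteq> {A..B}" and z: "\<And>x. x \<in> {A..B} \<Longrightarrow> x \<notin> {a..b} \<Longrightarrow> f x = 0"
  shows "integral {a..b} f = integral {A..B} f"
proof -
  have "integral {a..b} f = integral UNIV (\<lambda>x. if x \<in> {a..b} then f x else 0)"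
    by (rule integral_restrict_UNIV[symmetric])
  also have "(\<lambda>x. if x \<in> {a..b} then f x else 0) = (\<lambda>x. if x \<in> {A..B} then f x else 0)"
    using sub z by (auto intro!: ext)
  also have "integral UNIV \<dots> = integral {A..B} f" by (rule integral_restrict_UNIV)
  finally show ?thesis .
qed

lemma integral_translate_onto_factor:
  fixes F psi :: "real \<Rightarrow> real"
  assumes pz: "\<And>x. R < \<bar>x\<bar> \<Longrightarrow> psi x = 0" and c: "\<bar>c\<bar> \<le> 1"
  shows "integral {-R..R} (\<lambda>x. F (x + c) * psi x) = integral {-R-1..R+1} (\<lambda>z. F z * psi (z - c))"
proof -
  have "integral {-R..R} (\<lambda>x. F (x + c) * psi x) = integral {-R+c..R+c} (\<lambda>z. F z * psi (z - c))"
    using integral_Icc_shift[where f="\<lambda>z. F z * psi (z - c)" and a="-R" and b=R and c=c] by simp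
  also have "\<dots> = integral {-R-1..R+1} (\<lambda>z. F z * psi (z - c))"
  proof (rule integral_Icc_eq_superset)
    show "{-R+c..R+c} \<subseteq> {-R-1..R+1}" using c by auto
    show "F z * psi (z - c) = 0" if "z \<notin> {-R+c..R+c}" for z
      using that by (auto intro!: pz)
  qed
  finally show ?thesis .
qed

lemma periodic_of_int:
  fixes g :: "real \<Rightarrow> 'a" and p :: real
  assumes per: "\<And>x. g (x + p) = g x"
  shows "g (x + of_int k * p) = g x"
proof -
  have nat: "g (z + real n * p) = g z" for z n
  proof (induction n)
    case (Suc n)
    have "g (z + real (Suc n) * p) = g ((z + real n * p) + p)" by (simp add: algebra_simps)
    then show ?case using Suc per by simp
  qed simp
  show ?thesis
  proof (cases "k \<ge> 0")
    case True
    then show ?thesis using nat[of x "nat k"] by simp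
  next
    case False
    then have "x = (x + of_int k * p) + real (nat (- k)) * p" by (simp add: algebra_simps)
    then show ?thesis by (metis nat)
  qed
qed

lemma integral_period_translate:
  fixes g :: "real \<Rightarrow> real"
  assumes cont: "continuous_on UNIV g" and per: "\<And>x. g (x + p) = g x" and p: "p > 0"
  shows "integral {a..a+p} g = integral {b..b+p} g"
proof -
  define k where "k = \<lfloor>(a - b) / p\<rfloor>"
  define a' where "a' = a - of_int k * p"
  have "of_int k \<le> (a - b) / p" "(a - b) / p < of_int k + 1"
    unfolding k_def by linarith+
  then have "of_int k * p \<le> a - b" "a - b < (of_int k + 1) * p"
    using p by (simp_all add: pos_le_divide_eq pos_divide_less_eq)
  then have a': "b \<le> a'" "a' \<le> b + p" by (simp_all add: a'_def algebra_simps)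
  have int: "g integrable_on {c..d}" for c d
    by (rule integrable_continuous_real) (rule continuous_on_subset[OF cont], simp)
  have "integral {a..a+p} g = integral {a'..a'+p} (\<lambda>x. g (x + of_int k * p))"
    by (simp add: integral_Icc_shift a'_def)
  also have "\<dots> = integral {a'..a'+p} g"
    by (simp add: periodic_of_int[where g=g, OF per])
  also have "\<dots> = integral {a'..b+p} g + integral {b+p..a'+p} g"
    using Henstock_Kurzweil_Integration.integral_combine[OF _ _ int] a' by simp
  also have "integral {b+p..a'+p} g = integral {b..a'} (\<lambda>x. g (x + p))"
    by (simp add: integral_Icc_shift)
  also have "\<dots> = integral {b..a'} g"
    by (simp add: per)
  also have "integral {a'..b+p} g + integral {b..a'} g = integral {b..b+p} g"
    using Henstock_Kurzweil_Integration.integral_combine[OF _ _ int, of b a' "b+p"] a' by simp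
  finally show ?thesis .
qed

lemma integral_period_shift:
  fixes g :: "real \<Rightarrow> real"
  assumes cont: "continuous_on UNIV g" and per: "\<And>x. g (x + p) = g x" and p: "p > 0"
  shows "integral {a..a+p} (\<lambda>x. g (x + c)) = integral {a..a+p} g"
  using integral_period_translate[OF cont per p, of "a+c" a] by (simp add: integral_Icc_shift add_ac)

lemma integral_period_multiple:
  fixes g :: "real \<Rightarrow> real"
  assumes cont: "continuous_on UNIV g" and per: "\<And>x. g (x + p) = g x" and p: "p > 0"
  shows "integral {a..a + real n * p} g = real n * integral {a..a+p} g"
proof (induction n)
  case (Suc n)
  have int: "g integrable_on {c..d}" for c d
    by (rule integrable_continuous_real) (rule continuous_on_subset[OF cont], simp)
  have "integral {a..a + real (Suc n) * p} g
      = integral {a..a + real n * p} g + integral {a + real n * p..(a + real n * p) + p} g"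
    using Henstock_Kurzweil_Integration.integral_combine[OF _ _ int, of a "a + real n * p"] p
    by (simp add: algebra_simps)
  then show ?case
    using Suc integral_period_translate[OF cont per p, of "a + real n * p" a]
    by (simp add: algebra_simps)
qed simp

section \<open>A comparison principle\<close>

lemma closed_interval_induction:
  fixes A :: "real set"
  assumes closed: "closed A" and start: "a \<in> A"
    and step: "\<And>s. s \<in> A \<Longrightarrow> a \<le> s \<Longrightarrow> s < b \<Longrightarrow> \<exists>h>0. {s..s+h} \<subseteq> A"
  shows "{a..b} \<subseteq> A"
proof (cases "a \<le> b")
  case True
  define S where "S = {s \<in> {a..b}. {a..s} \<subseteq> A}"
  define \<sigma> where "\<sigma> = Sup S"
  have "a \<in> S" using True start by (simp add: S_def)
  have bdd: "bdd_above S" by (auto simp: S_def bdd_above_def)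
  have \<sigma>: "a \<le> \<sigma>" "\<sigma> \<le> b"
    using \<open>a \<in> S\<close> bdd unfolding \<sigma>_def by (auto intro!: cSup_upper cSup_least simp: S_def)
  have "\<sigma> \<in> closure S"
    unfolding \<sigma>_def using \<open>a \<in> S\<close> bdd by (intro closure_contains_Sup) auto
  moreover have "closure S \<subseteq> A"
    using closed by (intro closure_minimal) (auto simp: S_def)
  ultimately have "\<sigma> \<in> A" by blast
  have upto: "{a..\<sigma>} \<subseteq> A"
  proof
    fix \<tau> assume \<tau>: "\<tau> \<in> {a..\<sigma>}"
    show "\<tau> \<in> A"
    proof (cases "\<tau> = \<sigma>")
      case False
      then have "\<tau> < Sup S" using \<tau> by (simp add: \<sigma>_def)
      then obtain s where "s \<in> S" "\<tau> < s" using less_cSup_iff[OF _ bdd] \<open>a \<in> S\<close> by blast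
      then show ?thesis using \<tau> by (auto simp: S_def)
    qed (use \<open>\<sigma> \<in> A\<close> in simp)
  qed
  have "\<sigma> = b"
  proof (rule ccontr)
    assume "\<sigma> \<noteq> b"
    then have "\<sigma> < b" using \<sigma> by simp
    then obtain h where h: "h > 0" "{\<sigma>..\<sigma>+h} \<subseteq> A" using step \<open>\<sigma> \<in> A\<close> \<sigma> by blast
    define s where "s = min (\<sigma> + h) b"
    have "{a..s} \<subseteq> {a..\<sigma>} \<union> {\<sigma>..\<sigma>+h}" by (auto simp: s_def)
    then have "s \<in> S" using upto h \<sigma> \<open>\<sigma> < b\<close> by (auto simp: S_def s_def)
    then have "s \<le> \<sigma>" unfolding \<sigma>_def using bdd by (rule cSup_upper)
    then show False using h \<open>\<sigma> < b\<close> by (simp add: s_def)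
  qed
  then show ?thesis using upto by simp
qed simp

lemma nonpos_of_right_growth_bound:
  fixes f :: "real \<Rightarrow> real"
  assumes K: "K \<ge> 0" and cont: "continuous_on {0..} f" and f0: "f 0 \<le> 0"
    and step: "\<And>t \<epsilon>. t \<ge> 0 \<Longrightarrow> \<epsilon> > 0 \<Longrightarrow>
        \<exists>\<delta>>0. \<forall>h. 0 < h \<and> h < \<delta> \<longrightarrow> f (t + h) \<le> f t + h * (K * f t + \<epsilon>)"
    and T: "T \<ge> 0"
  shows "f T \<le> 0"
proof -
  \<comment> \<open>Compare with the strict supersolution \<open>c * exp ((K + 1) * s)\<close>, then let \<open>c \<rightarrow> 0\<close>.\<close>
  have bound: "f T \<le> c * exp ((K + 1) * T)" if c: "c > 0" for c
  proof -
    define \<phi> where "\<phi> s = c * exp ((K + 1) * s)" for s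
    define A where "A = {\<tau> \<in> {0..}. f \<tau> \<le> \<phi> \<tau>}"
    have "{0..T} \<subseteq> A"
    proof (rule closed_interval_induction)
      show "closed A" unfolding A_def \<phi>_def
        by (intro continuous_on_closed_Collect_le cont continuous_intros closed_atLeast)
      show "0 \<in> A" using f0 c by (simp add: A_def \<phi>_def)
      fix s assume "s \<in> A"
      then have s: "s \<ge> 0" "f s \<le> \<phi> s" by (auto simp: A_def)
      obtain \<delta> where \<delta>: "\<delta> > 0" "\<forall>h. 0 < h \<and> h < \<delta> \<longrightarrow> f (s + h) \<le> f s + h * (K * f s + c/2)"
        using step[OF s(1), of "c/2"] c by auto
      have "\<phi> s \<ge> c" using c s K by (simp add: \<phi>_def)
      have grow: "f (s + h) \<le> \<phi> (s + h)" if h: "0 < h" "h < \<delta>" for h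
      proof -
        have "(1 + h * K) * f s \<le> (1 + h * K) * \<phi> s"
          using s h K by (intro mult_left_mono) auto
        then have "f (s + h) \<le> \<phi> s + h * (K * \<phi> s + c/2)"
          using \<delta>(2) h by (auto simp: algebra_simps)
        also have "\<dots> \<le> \<phi> s * (1 + (K + 1) * h)"
          using \<open>\<phi> s \<ge> c\<close> c h by (simp add: algebra_simps)
        also have "\<dots> \<le> \<phi> s * exp ((K + 1) * h)"
          using \<open>\<phi> s \<ge> c\<close> c by (intro mult_left_mono exp_ge_add_one_self) auto
        also have "\<dots> = \<phi> (s + h)" by (simp add: \<phi>_def mult_exp_exp algebra_simps)
        finally show ?thesis .
      qed
      have "{s..s + \<delta>/2} \<subseteq> A"
      proof
        fix \<tau> assume \<tau>: "\<tau> \<in> {s..s + \<delta>/2}"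
        show "\<tau> \<in> A"
        proof (cases "\<tau> = s")
          case False
          then have "f (s + (\<tau> - s)) \<le> \<phi> (s + (\<tau> - s))"
            using \<tau> \<delta>(1) by (intro grow) auto
          then show ?thesis using \<tau> s by (simp add: A_def)
        qed (use s in \<open>simp add: A_def\<close>)
      qed
      then show "\<exists>h>0. {s..s+h} \<subseteq> A" using \<delta>(1) by (intro exI[of _ "\<delta>/2"]) auto
    qed
    then show ?thesis using T by (simp add: A_def \<phi>_def subset_iff)
  qed
  show ?thesis
  proof (rule field_le_epsilon)
    fix \<epsilon> :: real assume "\<epsilon> > 0"
    then show "f T \<le> 0 + \<epsilon>"
      using bound[of "\<epsilon> / exp ((K + 1) * T)"] by simp
  qed
qed

lemma has_vector_derivative_right_increment:
  fixes Z :: "real \<Rightarrow> 'a::real_normed_vector"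
  assumes "(Z has_vector_derivative Z') (at t within {0..})" "t \<ge> 0" "\<epsilon> > 0"
  shows "\<exists>d>0. \<forall>h. 0 < h \<and> h < d \<longrightarrow> norm (Z (t + h) - Z t - h *\<^sub>R Z') \<le> \<epsilon> * h"
proof -
  from assms(1)[unfolded has_vector_derivative_def has_derivative_within_alt] assms(3)
  obtain d where d: "d > 0" "\<forall>y\<in>{0..}. norm (y - t) < d \<longrightarrow>
      norm (Z y - Z t - (y - t) *\<^sub>R Z') \<le> \<epsilon> * norm (y - t)"
    by blast
  have "norm (Z (t + h) - Z t - h *\<^sub>R Z') \<le> \<epsilon> * h" if "0 < h" "h < d" for h
    using d(2)[rule_format, of "t + h"] assms(2) that by auto
  then show ?thesis using d(1) by blast
qed

lemma le_initial_of_euler_step_bound: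
  fixes Y :: "real \<Rightarrow> 'a::real_normed_vector" and N :: "'a \<Rightarrow> real"
  assumes der: "\<And>t. t \<ge> 0 \<Longrightarrow> (Y has_vector_derivative Y' t) (at t within {0..})"
    and c: "c > 0" and N_lip: "\<And>F G. N F \<le> N G + c * norm (F - G)"
    and K: "K \<ge> 0"
    and euler: "\<And>t. t \<ge> 0 \<Longrightarrow> \<exists>h\<^sub>0>0. \<forall>h. 0 < h \<and> h < h\<^sub>0 \<longrightarrow>
        N (Y t + h *\<^sub>R Y' t) \<le> N (Y t) + h * K * (N (Y t) - N (Y 0))"
    and T: "T \<ge> 0"
  shows "N (Y T) \<le> N (Y 0)"
proof -
  define f where "f t = N (Y t) - N (Y 0)" for t
  have N_cont: "continuous_on UNIV N"
  proof (rule lipschitz_on_continuous_on)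
    show "c-lipschitz_on UNIV N"
    proof (intro lipschitz_onI)
      show "dist (N F) (N G) \<le> c * dist F G" for F G
        using N_lip[of F G] N_lip[of G F] by (simp add: dist_norm abs_le_iff norm_minus_commute)
    qed (use c in simp)
  qed
  have "continuous_on {0..} Y"
    by (rule continuous_on_vector_derivative) (use der in auto)
  then have "continuous_on {0..} (\<lambda>t. N (Y t))"
    by (rule continuous_on_compose2[OF N_cont]) auto
  then have cont: "continuous_on {0..} f"
    unfolding f_def by (intro continuous_on_diff continuous_on_const)
  have "f T \<le> 0"
  proof (rule nonpos_of_right_growth_bound[OF K cont _ _ T])
    fix t \<epsilon> :: real assume t: "t \<ge> 0" and \<epsilon>: "\<epsilon> > 0"
    obtain d where d: "d > 0"
        "\<forall>h. 0 < h \<and> h < d \<longrightarrow> norm (Y (t + h) - Y t - h *\<^sub>R Y' t) \<le> (\<epsilon> / c) * h"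
      using has_vector_derivative_right_increment[OF der[OF t] t, of "\<epsilon> / c"] \<epsilon> c by auto
    obtain h\<^sub>0 where h\<^sub>0: "h\<^sub>0 > 0"
        "\<forall>h. 0 < h \<and> h < h\<^sub>0 \<longrightarrow> N (Y t + h *\<^sub>R Y' t) \<le> N (Y t) + h * K * f t"
      using euler[OF t] by (auto simp: f_def)
    have "f (t + h) \<le> f t + h * (K * f t + \<epsilon>)" if h: "0 < h" "h < min d h\<^sub>0" for h
    proof -
      have "N (Y (t + h)) \<le> N (Y t + h *\<^sub>R Y' t) + c * norm (Y (t + h) - (Y t + h *\<^sub>R Y' t))"
        by (rule N_lip)
      also have "c * norm (Y (t + h) - (Y t + h *\<^sub>R Y' t)) \<le> c * ((\<epsilon> / c) * h)"
        using d(2) h c by (intro mult_left_mono) (auto simp: algebra_simps)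
      also have "\<dots> = \<epsilon> * h" using c by simp
      also have "N (Y t + h *\<^sub>R Y' t) \<le> N (Y t) + h * K * f t" using h\<^sub>0(2) h by auto
      finally show ?thesis by (simp add: f_def algebra_simps)
    qed
    then show "\<exists>\<delta>>0. \<forall>h. 0 < h \<and> h < \<delta> \<longrightarrow> f (t + h) \<le> f t + h * (K * f t + \<epsilon>)"
      using d(1) h\<^sub>0(1) by (intro exI[of _ "min d h\<^sub>0"]) auto
  qed (simp add: f_def)
  then show ?thesis by (simp add: f_def)
qed

lemma vanishes_of_derivative_norm_bound:
  fixes Z :: "real \<Rightarrow> 'a::real_normed_vector"
  assumes der: "\<And>t. t \<ge> 0 \<Longrightarrow> (Z has_vector_derivative Z' t) (at t within {0..})"
    and K: "K \<ge> 0" and bound: "\<And>t. t \<ge> 0 \<Longrightarrow> norm (Z' t) \<le> K * norm (Z t)"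
    and Z0: "Z 0 = 0" and T: "T \<ge> 0"
  shows "Z T = 0"
proof -
  have lip: "norm F \<le> norm G + 1 * norm (F - G)" for F G :: 'a
    using norm_triangle_ineq2[of F G] by simp
  have euler: "\<exists>h\<^sub>0>0. \<forall>h. 0 < h \<and> h < h\<^sub>0 \<longrightarrow>
      norm (Z t + h *\<^sub>R Z' t) \<le> norm (Z t) + h * K * (norm (Z t) - norm (Z 0))" if t: "t \<ge> 0" for t
  proof -
    have "norm (Z t + h *\<^sub>R Z' t) \<le> norm (Z t) + h * K * norm (Z t)" if "0 < h" for h
    proof -
      have "h * norm (Z' t) \<le> h * (K * norm (Z t))"
        using bound[OF t] that by (intro mult_left_mono) auto
      moreover have "norm (Z t + h *\<^sub>R Z' t) \<le> norm (Z t) + h * norm (Z' t)"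
        using norm_triangle_ineq[of "Z t" "h *\<^sub>R Z' t"] that by simp
      ultimately show ?thesis by (simp add: mult.assoc)
    qed
    then show ?thesis by (intro exI[of _ 1]) (simp add: Z0)
  qed
  have "norm (Z T) \<le> norm (Z 0)"
    by (rule le_initial_of_euler_step_bound[where N=norm, OF der zero_less_one lip K euler T])
  then show ?thesis by (simp add: Z0)
qed

section \<open>Test functions\<close>

lemma smooth_fun_continuous: "smooth_fun f \<Longrightarrow> continuous_on UNIV f"
  unfolding smooth_fun_def
  by (metis DERIV_isCont continuous_at_imp_continuous_on)

lemma smooth_fun_has_deriv:
  assumes "smooth_fun f"
  shows "(f has_real_derivative deriv f x) (at x)"
proof -
  obtain D where "D 0 = f" "\<And>n x. (D n has_real_derivative D (Suc n) x) (at x)"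
    using assms unfolding smooth_fun_def by blast
  then show ?thesis using DERIV_imp_deriv by metis
qed

lemma smooth_fun_deriv:
  assumes "smooth_fun f"
  shows "smooth_fun (deriv f)"
proof -
  obtain D where D0: "D 0 = f" and D: "\<And>n x. (D n has_real_derivative D (Suc n) x) (at x)"
    using assms unfolding smooth_fun_def by blast
  have "D (Suc 0) = deriv f"
    using D[of 0] D0 DERIV_imp_deriv by (metis ext)
  then show ?thesis
    unfolding smooth_fun_def using D by (intro exI[of _ "\<lambda>n. D (Suc n)"]) auto
qed

lemma compact_supp_vanishes_outside:
  assumes "compact_supp f"
  shows "\<exists>R>0. \<forall>x. \<bar>x\<bar> > R \<longrightarrow> f x = 0"
proof -
  have "bounded (closure {x. f x \<noteq> 0})" using assms compact_imp_bounded by (auto simp: compact_supp_def)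
  then obtain a where a: "\<forall>x\<in>closure {x. f x \<noteq> 0}. norm x \<le> a" by (auto simp: bounded_iff)
  show ?thesis
  proof (intro exI[of _ "max a 1"] conjI allI impI)
    fix x :: real assume "\<bar>x\<bar> > max a 1"
    then show "f x = 0" using a closure_subset[of "{x. f x \<noteq> 0}"] by force
  qed simp
qed

lemma derivative_vanishes_outside:
  fixes g g' :: "real \<Rightarrow> real"
  assumes d: "\<And>x. (g has_real_derivative g' x) (at x)"
    and z: "\<And>x. \<bar>x\<bar> > R \<Longrightarrow> g x = 0" and x: "\<bar>x\<bar> > R"
  shows "g' x = 0"
proof -
  have "((\<lambda>_. 0) has_real_derivative g' x) (at x)"
    by (rule has_field_derivative_transform_within_open[OF d, of "{x. \<bar>x\<bar> > R}"])
       (use x z in \<open>auto intro!: open_Collect_less continuous_intros\<close>)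
  then show ?thesis using DERIV_unique[OF _ DERIV_const] by blast
qed

lemma bounded_if_vanishes_outside:
  fixes g :: "real \<Rightarrow> real"
  assumes c: "continuous_on UNIV g" and z: "\<And>x. \<bar>x\<bar> > R \<Longrightarrow> g x = 0"
  shows "\<exists>B\<ge>0. \<forall>x. \<bar>g x\<bar> \<le> B"
proof -
  have "bounded (g ` {-R..R})"
    by (intro compact_imp_bounded compact_continuous_image continuous_on_subset[OF c]) auto
  then obtain a where a: "\<forall>y\<in>g ` {-R..R}. norm y \<le> a" by (auto simp: bounded_iff)
  show ?thesis
  proof (intro exI[of _ "max a 0"] conjI allI)
    fix x show "\<bar>g x\<bar> \<le> max a 0"
    proof (cases "\<bar>x\<bar> > R")
      case False then have "x \<in> {-R..R}" by auto
      then have "norm (g x) \<le> a" using a by blast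
      then show ?thesis by simp
    qed (use z in auto)
  qed simp
qed

lemma smooth_compact_supp_bounds:
  assumes psi: "smooth_fun psi" "compact_supp psi"
  obtains R P1 P2 where "R > 0" "\<And>x. R < \<bar>x\<bar> \<Longrightarrow> psi x = 0" "\<And>x. R < \<bar>x\<bar> \<Longrightarrow> deriv psi x = 0"
    "\<And>x. \<bar>deriv psi x\<bar> \<le> P1" "\<And>x. \<bar>deriv (deriv psi) x\<bar> \<le> P2"
proof -
  obtain R where R: "R > 0" "\<And>x. R < \<bar>x\<bar> \<Longrightarrow> psi x = 0"
    using compact_supp_vanishes_outside[OF psi(2)] by blast
  have smooth': "smooth_fun (deriv psi)" "smooth_fun (deriv (deriv psi))"
    using smooth_fun_deriv psi(1) by blast+
  have z1: "deriv psi x = 0" if "R < \<bar>x\<bar>" for x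
    using derivative_vanishes_outside[OF smooth_fun_has_deriv[OF psi(1)] R(2) that] .
  have z2: "deriv (deriv psi) x = 0" if "R < \<bar>x\<bar>" for x
    using derivative_vanishes_outside[OF smooth_fun_has_deriv[OF smooth'(1)] z1 that] .
  obtain P1 P2 where "\<forall>x. \<bar>deriv psi x\<bar> \<le> P1" "\<forall>x. \<bar>deriv (deriv psi) x\<bar> \<le> P2"
    using bounded_if_vanishes_outside[OF smooth_fun_continuous[OF smooth'(1)] z1]
      bounded_if_vanishes_outside[OF smooth_fun_continuous[OF smooth'(2)] z2] by blast
  then show thesis using that R z1 by blast
qed

lemma abs_diff_le_of_derivative_bound:
  fixes g g1 :: "real \<Rightarrow> real"
  assumes d: "\<And>x. (g has_real_derivative g1 x) (at x)" and b: "\<And>z. \<bar>g1 z\<bar> \<le> P"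
  shows "\<bar>g y - g x\<bar> \<le> P * \<bar>y - x\<bar>"
  using field_differentiable_bound[of UNIV g g1 P y x] d b
  by (auto simp: has_field_derivative_at_within)

lemma abs_diff_le_of_deriv_le:
  fixes g :: "real \<Rightarrow> real"
  assumes "\<And>x. g differentiable (at x)" and "\<And>x. \<bar>deriv g x\<bar> \<le> P"
  shows "\<bar>g y - g x\<bar> \<le> P * \<bar>y - x\<bar>"
  using assms DERIV_deriv_iff_real_differentiable by (blast intro: abs_diff_le_of_derivative_bound)

lemma taylor_remainder_le:
  fixes g g1 g2 :: "real \<Rightarrow> real"
  assumes d1: "\<And>x. (g has_real_derivative g1 x) (at x)"
    and d2: "\<And>x. (g1 has_real_derivative g2 x) (at x)"
    and b: "\<And>z. \<bar>g2 z\<bar> \<le> P"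
  shows "\<bar>g (x + s) - g x - s * g1 x\<bar> \<le> s\<^sup>2 * P"
proof -
  define S where "S = {min x (x+s)..max x (x+s)}"
  define h where "h z = g z - z * g1 x" for z
  have hd: "(h has_real_derivative (g1 z - g1 x)) (at z within S)" for z
    unfolding h_def by (rule has_field_derivative_at_within) (auto intro!: derivative_eq_intros d1)
  have hb: "\<bar>g1 z - g1 x\<bar> \<le> \<bar>s\<bar> * P" if "z \<in> S" for z
  proof -
    have "\<bar>g1 z - g1 x\<bar> \<le> P * \<bar>z - x\<bar>" by (rule abs_diff_le_of_derivative_bound[OF d2 b])
    also have "\<dots> \<le> P * \<bar>s\<bar>"
      using that b[of 0] by (intro mult_left_mono) (auto simp: S_def abs_if min_def max_def split: if_splits)
    finally show ?thesis by (simp add: mult.commute)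
  qed
  have "norm (h (x + s) - h x) \<le> (\<bar>s\<bar> * P) * norm ((x + s) - x)"
    by (rule field_differentiable_bound[of S h "\<lambda>z. g1 z - g1 x"])
       (use hd hb in \<open>auto simp: S_def\<close>)
  then show ?thesis by (simp add: h_def algebra_simps power2_eq_square abs_mult)
qed

lemma difference_quotient_error_le:
  fixes g g1 g2 :: "real \<Rightarrow> real"
  assumes d1: "\<And>x. (g has_real_derivative g1 x) (at x)"
    and d2: "\<And>x. (g1 has_real_derivative g2 x) (at x)"
    and b: "\<And>z. \<bar>g2 z\<bar> \<le> P" and s: "s \<noteq> 0"
  shows "\<bar>(g (x + s) - g x) / s - g1 x\<bar> \<le> \<bar>s\<bar> * P"
proof -
  have "(g (x + s) - g x) / s - g1 x = (g (x + s) - g x - s * g1 x) / s"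
    using s by (simp add: field_simps)
  also have "\<bar>\<dots>\<bar> \<le> s\<^sup>2 * P / \<bar>s\<bar>"
    unfolding abs_divide using taylor_remainder_le[OF d1 d2 b] s by (intro divide_right_mono) auto
  also have "\<dots> = \<bar>s\<bar> * P" using s by (cases "s < 0") (simp_all add: power2_eq_square)
  finally show ?thesis .
qed

section \<open>Mollification\<close>

definition supported_kernel :: "(real \<Rightarrow> real) \<Rightarrow> real \<Rightarrow> bool" where
  "supported_kernel \<phi> r \<longleftrightarrow> continuous_on UNIV \<phi> \<and> r > 0 \<and> (\<forall>z. \<bar>z\<bar> > r \<longrightarrow> \<phi> z = 0)"

lemma smooth_compact_supp_kernel:
  assumes "smooth_fun \<phi>" "compact_supp \<phi>"
  obtains r Pm where "supported_kernel \<phi> r" "\<And>z. \<bar>\<phi> z\<bar> \<le> Pm"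
proof -
  obtain r where r: "r > 0" "\<And>z. r < \<bar>z\<bar> \<Longrightarrow> \<phi> z = 0"
    using compact_supp_vanishes_outside[OF assms(2)] by blast
  obtain Pm where "\<forall>z. \<bar>\<phi> z\<bar> \<le> Pm"
    using bounded_if_vanishes_outside[OF smooth_fun_continuous[OF assms(1)] r(2)] by blast
  then show thesis
    using r smooth_fun_continuous[OF assms(1)] by (intro that[of r Pm]) (auto simp: supported_kernel_def)
qed

lemma mollifier_vanishes:
  assumes "supported_kernel \<phi> r" "a > 0" "\<bar>z\<bar> > a * r"
  shows "mollifier a \<phi> z = 0"
proof -
  have "\<bar>z / a\<bar> > r" using assms by (simp add: field_simps abs_divide)
  then show ?thesis using assms by (simp add: mollifier_def supported_kernel_def)
qed

lemma continuous_on_mollifier: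
  assumes "supported_kernel \<phi> r"
  shows "continuous_on UNIV (mollifier a \<phi>)"
proof -
  have "continuous_on UNIV (\<lambda>z. \<phi> (z * inverse a) * inverse a)"
    using assms by (auto simp: supported_kernel_def intro!: continuous_intros continuous_on_compose2[of UNIV \<phi>])
  then show ?thesis unfolding mollifier_def by (simp add: divide_inverse)
qed

lemma continuous_on_mollifier_compose:
  assumes "supported_kernel \<phi> r" "continuous_on S g"
  shows "continuous_on S (\<lambda>x. mollifier a \<phi> (g x))"
  using continuous_on_compose2[OF continuous_on_mollifier[OF assms(1)] assms(2)] by auto

lemma abs_mollifier_le:
  assumes "\<And>z. \<bar>\<phi> z\<bar> \<le> Pm" "a > 0"
  shows "\<bar>mollifier a \<phi> z\<bar> \<le> Pm / a"
  using assms by (simp add: mollifier_def abs_divide divide_right_mono)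

lemma conv_eq_integral_Icc:
  assumes kernel: "supported_kernel \<phi> r" and a: "a > 0" and F: "continuous_on UNIV F"
    and cd: "c \<le> x - a * r" "x + a * r \<le> d"
  shows "conv F (mollifier a \<phi>) x = integral {c..d} (\<lambda>y. F y * mollifier a \<phi> (x - y))"
proof -
  have "conv F (mollifier a \<phi>) x = integral UNIV (\<lambda>y. if y \<in> {c..d} then F y * mollifier a \<phi> (x - y) else 0)"
    unfolding conv_def
  proof (rule arg_cong[where f="integral UNIV"], rule ext)
    fix y show "F y * mollifier a \<phi> (x - y) = (if y \<in> {c..d} then F y * mollifier a \<phi> (x - y) else 0)"
    proof (cases "y \<in> {c..d}")
      case False
      then have "\<bar>x - y\<bar> > a * r" using cd by auto
      then show ?thesis using mollifier_vanishes[OF kernel a] False by simp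
    qed simp
  qed
  also have "\<dots> = integral {c..d} (\<lambda>y. F y * mollifier a \<phi> (x - y))"
    by (rule integral_restrict_UNIV)
  finally show ?thesis .
qed

lemma conv_shift:
  assumes kernel: "supported_kernel \<phi> r" and a: "a > 0" and F: "continuous_on UNIV F"
  shows "conv (\<lambda>y. F (y + s)) (mollifier a \<phi>) x = conv F (mollifier a \<phi>) (x + s)"
proof -
  have Fs: "continuous_on UNIV (\<lambda>y. F (y + s))"
    by (rule continuous_on_compose2[OF F]) (auto intro: continuous_intros)
  have "conv (\<lambda>y. F (y + s)) (mollifier a \<phi>) x
      = integral {x - a*r..x + a*r} (\<lambda>y. F (y + s) * mollifier a \<phi> (x - y))"
    by (rule conv_eq_integral_Icc[OF kernel a Fs]) auto
  also have "\<dots> = integral {x - a*r..x + a*r} (\<lambda>y. (\<lambda>z. F z * mollifier a \<phi> (x + s - z)) (y + s))"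
    by (simp add: algebra_simps)
  also have "\<dots> = integral {x - a*r + s..x + a*r + s} (\<lambda>z. F z * mollifier a \<phi> (x + s - z))"
    by (rule integral_Icc_shift)
  also have "\<dots> = conv F (mollifier a \<phi>) (x + s)"
    by (rule conv_eq_integral_Icc[OF kernel a F, symmetric]) auto
  finally show ?thesis .
qed

lemma conv_lincomb3:
  assumes kernel: "supported_kernel \<phi> r" and a: "a > 0"
    and F: "continuous_on UNIV F" and G: "continuous_on UNIV G" and H: "continuous_on UNIV H"
  shows "conv (\<lambda>y. p * F y + q * G y + w * H y) (mollifier a \<phi>) x
      = p * conv F (mollifier a \<phi>) x + q * conv G (mollifier a \<phi>) x + w * conv H (mollifier a \<phi>) x"
proof -
  let ?I = "{x - a*r..x + a*r}"
  have c: "continuous_on UNIV K \<Longrightarrow> (\<lambda>y. K y * mollifier a \<phi> (x - y)) integrable_on ?I" for K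
    by (intro integrable_continuous_real continuous_intros continuous_on_mollifier_compose[OF kernel]) (auto intro: continuous_on_subset)
  have "conv (\<lambda>y. p * F y + q * G y + w * H y) (mollifier a \<phi>) x
      = integral ?I (\<lambda>y. (p * F y + q * G y + w * H y) * mollifier a \<phi> (x - y))"
    by (rule conv_eq_integral_Icc[OF kernel a]) (auto intro!: continuous_intros F G H)
  also have "\<dots> = integral ?I (\<lambda>y. p * (F y * mollifier a \<phi> (x - y)) + q * (G y * mollifier a \<phi> (x - y))
       + w * (H y * mollifier a \<phi> (x - y)))"
    by (simp add: algebra_simps)
  also have "\<dots> = p * integral ?I (\<lambda>y. F y * mollifier a \<phi> (x - y)) + q * integral ?I (\<lambda>y. G y * mollifier a \<phi> (x - y))
       + w * integral ?I (\<lambda>y. H y * mollifier a \<phi> (x - y))"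
    by (intro integral_unique has_integral_add has_integral_mult_right integrable_integral c F G H)
  also have "\<dots> = p * conv F (mollifier a \<phi>) x + q * conv G (mollifier a \<phi>) x + w * conv H (mollifier a \<phi>) x"
    using conv_eq_integral_Icc[OF kernel a F, of "x - a*r" x "x + a*r"] conv_eq_integral_Icc[OF kernel a G, of "x - a*r" x "x + a*r"]
      conv_eq_integral_Icc[OF kernel a H, of "x - a*r" x "x + a*r"] by simp
  finally show ?thesis .
qed

lemma continuous_on_conv:
  assumes kernel: "supported_kernel \<phi> r" and a: "a > 0" and F: "continuous_on UNIV F"
  shows "continuous_on UNIV (conv F (mollifier a \<phi>))"
proof -
  have "isCont (conv F (mollifier a \<phi>)) x0" for x0
  proof -
    let ?J = "{x0 - 1..x0 + 1}"
    have "continuous_on ?J (\<lambda>x. integral {x0 - 1 - a*r..x0 + 1 + a*r} (\<lambda>y. F y * mollifier a \<phi> (x - y)))"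
    proof (rule integral_continuous_on_param[where a="x0 - 1 - a*r" and b="x0 + 1 + a*r", simplified])
      have "continuous_on (?J \<times> {x0 - 1 - a*r..x0 + 1 + a*r}) (\<lambda>z. F (snd z) * mollifier a \<phi> (fst z - snd z))"
        by (intro continuous_intros continuous_on_compose2[OF F] continuous_on_mollifier_compose[OF kernel]) auto
      then show "continuous_on (?J \<times> {x0 - 1 - a*r..x0 + 1 + a*r}) (\<lambda>(x, y). F y * mollifier a \<phi> (x - y))"
        by (simp add: case_prod_beta)
    qed
    then have "continuous_on ?J (conv F (mollifier a \<phi>))"
      by (rule continuous_on_eq) (rule conv_eq_integral_Icc[OF kernel a F, symmetric], auto)
    then show ?thesis
      by (rule continuous_on_interior) (auto simp: interior_atLeastAtMost_real)
  qed
  then show ?thesis by (simp add: continuous_at_imp_continuous_on)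
qed

lemma at_within_atLeast_neq_bot: "t \<ge> (0::real) \<Longrightarrow> at t within {0..} \<noteq> bot"
proof
  assume t: "t \<ge> 0" and b: "at t within {0..} = bot"
  have "at_right t \<le> at t within {0..}" using t by (intro at_le) auto
  then have "at_right t = bot" using b by (simp add: bot_unique)
  then show False using trivial_limit_at_right_real by simp
qed

lemma bounded_linear_conv_apply:
  assumes kernel: "supported_kernel \<phi> r" and a: "a > 0"
  shows "bounded_linear (\<lambda>F :: real \<Rightarrow>\<^sub>C real. conv (\<lambda>y. F y) (mollifier a \<phi>) x)"
proof -
  let ?I = "{x - a*r..x + a*r}"
  define L where "L F = integral ?I (\<lambda>y. apply_bcontfun F y * mollifier a \<phi> (x - y))" for F
  have c: "(\<lambda>y. apply_bcontfun F y * mollifier a \<phi> (x - y)) integrable_on ?I" for F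
    by (auto intro!: integrable_continuous_real continuous_intros continuous_on_mollifier_compose[OF kernel])
  have cm: "(\<lambda>y. \<bar>mollifier a \<phi> (x - y)\<bar>) integrable_on ?I"
    by (auto intro!: integrable_continuous_real continuous_intros continuous_on_mollifier_compose[OF kernel])
  have "(\<lambda>F :: real \<Rightarrow>\<^sub>C real. conv (\<lambda>y. F y) (mollifier a \<phi>) x) = L"
    unfolding L_def by (intro ext conv_eq_integral_Icc[OF kernel a]) auto
  moreover have "bounded_linear L"
  proof (rule bounded_linear_intro[where K="integral ?I (\<lambda>y. \<bar>mollifier a \<phi> (x - y)\<bar>)"])
    fix F G :: "real \<Rightarrow>\<^sub>C real" and k :: real
    show "L (F + G) = L F + L G"
      unfolding L_def
      by (simp add: distrib_right Henstock_Kurzweil_Integration.integral_add[OF c c])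
    show "L (k *\<^sub>R F) = k *\<^sub>R L F"
      unfolding L_def by (simp add: mult.assoc)
    have "norm (L F) \<le> integral ?I (\<lambda>y. norm F * \<bar>mollifier a \<phi> (x - y)\<bar>)"
      unfolding L_def
    proof (rule integral_norm_bound_integral[OF c])
      show "(\<lambda>y. norm F * \<bar>mollifier a \<phi> (x - y)\<bar>) integrable_on ?I"
        by (rule integrable_on_mult_right[OF cm])
      show "norm (apply_bcontfun F y * mollifier a \<phi> (x - y)) \<le> norm F * \<bar>mollifier a \<phi> (x - y)\<bar>" for y
        using norm_bounded[of F y] by (simp add: abs_mult mult_right_mono)
    qed
    then show "norm (L F) \<le> norm F * integral ?I (\<lambda>y. \<bar>mollifier a \<phi> (x - y)\<bar>)"
      by simp
  qed
  ultimately show ?thesis by simp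
qed

lemma vector_derivative_conv:
  fixes X :: "real \<Rightarrow> (real \<Rightarrow>\<^sub>C real)"
  assumes kernel: "supported_kernel \<phi> r" and a: "a > 0"
    and der: "(X has_vector_derivative Xd) (at t within {0..})" and t: "t \<ge> 0"
  shows "vector_derivative (\<lambda>s. conv (\<lambda>y. X s y) (mollifier a \<phi>) x) (at t within {0..})
       = conv (\<lambda>y. Xd y) (mollifier a \<phi>) x"
  using bounded_linear.has_vector_derivative[OF bounded_linear_conv_apply[OF kernel a] der]
  by (rule vector_derivative_within[OF at_within_atLeast_neq_bot[OF t]])

lemma integral_abs_mollifier_le:
  assumes kernel: "supported_kernel \<phi> r" and a: "a > 0" and Pm: "\<And>z. \<bar>\<phi> z\<bar> \<le> Pm"
  shows "integral {A..B} (\<lambda>x. \<bar>mollifier a \<phi> (x - y)\<bar>) \<le> 2 * r * Pm"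
proof -
  let ?m = "mollifier a \<phi>"
  let ?I = "{y - a*r..y + a*r}"
  have ci: "(\<lambda>x. \<bar>?m (x - y)\<bar>) integrable_on {p..q}" for p q
    by (intro integrable_continuous_real continuous_intros continuous_on_mollifier_compose[OF kernel])
  have "integral {A..B} (\<lambda>x. \<bar>?m (x - y)\<bar>) = integral UNIV (\<lambda>x. if x \<in> {A..B} then \<bar>?m (x - y)\<bar> else 0)"
    by (rule integral_restrict_UNIV[symmetric])
  also have "\<dots> \<le> integral UNIV (\<lambda>x. if x \<in> ?I then \<bar>?m (x - y)\<bar> else 0)"
  proof (rule Henstock_Kurzweil_Integration.integral_le)
    show "(\<lambda>x. if x \<in> {A..B} then \<bar>?m (x - y)\<bar> else 0) integrable_on UNIV"
      by (rule integrable_restrict_UNIV[THEN iffD2, OF ci])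
    show "(\<lambda>x. if x \<in> ?I then \<bar>?m (x - y)\<bar> else 0) integrable_on UNIV"
      by (rule integrable_restrict_UNIV[THEN iffD2, OF ci])
    fix x
    show "(if x \<in> {A..B} then \<bar>?m (x - y)\<bar> else 0) \<le> (if x \<in> ?I then \<bar>?m (x - y)\<bar> else 0)"
    proof (cases "x \<in> ?I")
      case False
      then have "\<bar>x - y\<bar> > a * r" by auto
      then show ?thesis using mollifier_vanishes[OF kernel a] False by simp
    qed simp
  qed
  also have "\<dots> = integral ?I (\<lambda>x. \<bar>?m (x - y)\<bar>)" by (rule integral_restrict_UNIV)
  also have "\<dots> \<le> integral ?I (\<lambda>x. Pm / a)"
    by (rule Henstock_Kurzweil_Integration.integral_le[OF ci]) (auto intro: abs_mollifier_le[OF Pm a])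
  also have "\<dots> = 2 * r * Pm"
    using a kernel by (simp add: supported_kernel_def field_simps)
  finally show ?thesis .
qed

lemma abs_conv_le:
  assumes kernel: "supported_kernel \<phi> r" and a: "a > 0" and Yc: "continuous_on UNIV Y" and Kc: "continuous_on UNIV K"
    and box: "c \<le> x - a * r" "x + a * r \<le> d"
    and kb: "\<And>y. \<bar>x - y\<bar> \<le> a * r \<Longrightarrow> \<bar>K y\<bar> \<le> \<kappa> * \<bar>Y y\<bar>"
  shows "\<bar>conv K (mollifier a \<phi>) x\<bar> \<le> \<kappa> * integral {c..d} (\<lambda>y. \<bar>Y y\<bar> * \<bar>mollifier a \<phi> (x - y)\<bar>)"
proof -
  let ?m = "mollifier a \<phi>"
  have "\<bar>conv K ?m x\<bar> = norm (integral {c..d} (\<lambda>y. K y * ?m (x - y)))"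
    by (simp add: conv_eq_integral_Icc[OF kernel a Kc box])
  also have "\<dots> \<le> integral {c..d} (\<lambda>y. \<kappa> * (\<bar>Y y\<bar> * \<bar>?m (x - y)\<bar>))"
  proof (rule integral_norm_bound_integral)
    show "(\<lambda>y. K y * ?m (x - y)) integrable_on {c..d}"
      by (intro integrable_continuous_real continuous_intros continuous_on_mollifier_compose[OF kernel] continuous_on_subset[OF Kc]) auto
    show "(\<lambda>y. \<kappa> * (\<bar>Y y\<bar> * \<bar>?m (x - y)\<bar>)) integrable_on {c..d}"
      by (intro integrable_continuous_real continuous_intros continuous_on_mollifier_compose[OF kernel] continuous_on_subset[OF Yc]) auto
    fix y
    show "norm (K y * ?m (x - y)) \<le> \<kappa> * (\<bar>Y y\<bar> * \<bar>?m (x - y)\<bar>)"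
    proof (cases "\<bar>x - y\<bar> \<le> a * r")
      case True
      then show ?thesis using kb[OF True]
        by (simp add: abs_mult mult_right_mono mult.assoc[symmetric])
    next
      case False
      then show ?thesis using mollifier_vanishes[OF kernel a, of "x - y"] by simp
    qed
  qed
  also have "\<dots> = \<kappa> * integral {c..d} (\<lambda>y. \<bar>Y y\<bar> * \<bar>?m (x - y)\<bar>)"
    by (simp add: integral_mult)
  finally show ?thesis .
qed

lemma iterated_integral_abs_mollifier_le:
  assumes kernel: "supported_kernel \<phi> r" and a: "a > 0" and Pm: "\<And>z. \<bar>\<phi> z\<bar> \<le> Pm" and Yc: "continuous_on UNIV Y"
  shows "integral {p..q} (\<lambda>x. integral {c..d} (\<lambda>y. \<bar>Y y\<bar> * \<bar>mollifier a \<phi> (x - y)\<bar>))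
       \<le> 2 * r * Pm * integral {c..d} (\<lambda>y. \<bar>Y y\<bar>)"
proof -
  let ?m = "mollifier a \<phi>"
  have cont: "continuous_on (cbox (p, c) (q, d)) (\<lambda>(x, y). \<bar>Y y\<bar> * \<bar>?m (x - y)\<bar>)"
  proof -
    have "continuous_on (cbox (p, c) (q, d)) (\<lambda>z. \<bar>Y (snd z)\<bar> * \<bar>?m (fst z - snd z)\<bar>)"
      by (intro continuous_intros continuous_on_compose2[OF Yc] continuous_on_mollifier_compose[OF kernel]) auto
    then show ?thesis by (simp add: case_prod_beta)
  qed
  have "integral {p..q} (\<lambda>x. integral {c..d} (\<lambda>y. \<bar>Y y\<bar> * \<bar>?m (x - y)\<bar>))
      = integral {c..d} (\<lambda>y. integral {p..q} (\<lambda>x. \<bar>Y y\<bar> * \<bar>?m (x - y)\<bar>))"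
    using integral_swap_continuous[OF cont] by simp
  also have "\<dots> = integral {c..d} (\<lambda>y. \<bar>Y y\<bar> * integral {p..q} (\<lambda>x. \<bar>?m (x - y)\<bar>))"
    by (simp add: integral_mult)
  also have "\<dots> \<le> integral {c..d} (\<lambda>y. \<bar>Y y\<bar> * (2 * r * Pm))"
  proof (rule Henstock_Kurzweil_Integration.integral_le)
    have "continuous_on UNIV (\<lambda>y. integral {p..q} (\<lambda>x. \<bar>?m (x - y)\<bar>))"
    proof (rule integral_continuous_on_param[where a=p and b=q, simplified])
      have "continuous_on (UNIV \<times> {p..q}) (\<lambda>z. \<bar>?m (snd z - fst z)\<bar>)"
        by (intro continuous_intros continuous_on_mollifier_compose[OF kernel])
      then show "continuous_on (UNIV \<times> {p..q}) (\<lambda>(y, x). \<bar>?m (x - y)\<bar>)"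
        by (simp add: case_prod_beta)
    qed
    then show "(\<lambda>y. \<bar>Y y\<bar> * integral {p..q} (\<lambda>x. \<bar>?m (x - y)\<bar>)) integrable_on {c..d}"
      by (intro integrable_continuous_real continuous_intros continuous_on_subset[OF Yc])
         (auto intro: continuous_on_subset)
    show "(\<lambda>y. \<bar>Y y\<bar> * (2 * r * Pm)) integrable_on {c..d}"
      by (intro integrable_continuous_real continuous_intros continuous_on_subset[OF Yc]) auto
    fix y show "\<bar>Y y\<bar> * integral {p..q} (\<lambda>x. \<bar>?m (x - y)\<bar>) \<le> \<bar>Y y\<bar> * (2 * r * Pm)"
      by (intro mult_left_mono integral_abs_mollifier_le[OF kernel a Pm]) auto
  qed
  also have "\<dots> = 2 * r * Pm * integral {c..d} (\<lambda>y. \<bar>Y y\<bar>)"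
    by (simp add: integral_mult mult.commute)
  finally show ?thesis .
qed

section \<open>The upwind lattice equation\<close>

definition upwind :: "real \<Rightarrow> (real \<Rightarrow> real) \<Rightarrow> (real \<Rightarrow> real) \<Rightarrow> real \<Rightarrow> real" where
  "upwind e u y x = (1 / e) * (y (x - e) * max 0 (u (x - e)) - y x * \<bar>u x\<bar>
      + y (x + e) * max 0 (- u (x + e)))"

lemma upwind_abs_le:
  assumes e: "e > 0" and u: "\<And>z. \<bar>u z\<bar> \<le> M" and y: "\<And>z. \<bar>y z\<bar> \<le> B"
  shows "\<bar>upwind e u y x\<bar> \<le> 3 * M / e * B"
proof -
  have flux: "\<bar>y z * m\<bar> \<le> B * M" if "\<bar>m\<bar> \<le> M" for z m
    unfolding abs_mult using y[of z] that by (intro mult_mono) auto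
  have "\<bar>max 0 (u z)\<bar> \<le> M" "\<bar>max 0 (- u z)\<bar> \<le> M" for z
    using u[of z] by auto
  then have "\<bar>y (x - e) * max 0 (u (x - e)) - y x * \<bar>u x\<bar> + y (x + e) * max 0 (- u (x + e))\<bar>
      \<le> 3 * (B * M)"
    using flux[of "max 0 (u (x - e))" "x - e"] flux[of "\<bar>u x\<bar>" x]
      flux[of "max 0 (- u (x + e))" "x + e"] u[of x]
    by (simp add: abs_le_iff)
  then show ?thesis
    using e by (simp add: upwind_def abs_mult field_simps)
qed

lemma upwind_periodic_diff:
  assumes per: "\<And>z. u (z + p) = u z"
  shows "upwind e u y (x + p) - upwind e u y x = upwind e u (\<lambda>z. y (z + p) - y z) x"
proof -
  have "x + p - e = x - e + p" "x + p + e = x + e + p" by simp_all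
  then show ?thesis
    unfolding upwind_def by (simp only: per) (simp add: algebra_simps)
qed

lemma abs_upwind_euler_step_le:
  assumes e: "e > 0" and h: "0 \<le> h" "h * M \<le> e" and ub: "\<And>z. \<bar>u z\<bar> \<le> M"
  shows "\<bar>y x + h * upwind e u y x\<bar> \<le> \<bar>y x\<bar> * (1 - h / e * \<bar>u x\<bar>)
      + h / e * (\<bar>y (x - e)\<bar> * max 0 (u (x - e))) + h / e * (\<bar>y (x + e)\<bar> * max 0 (- u (x + e)))"
proof -
  define q where "q = h / e"
  have q: "0 \<le> q" "q * M \<le> 1" using h e by (auto simp: q_def field_simps)
  have "y x + h * upwind e u y x = y x * (1 - q * \<bar>u x\<bar>) + q * (y (x - e) * max 0 (u (x - e)))
        + q * (y (x + e) * max 0 (- u (x + e)))"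
    using e by (simp add: upwind_def q_def field_simps)
  moreover have "0 \<le> 1 - q * \<bar>u x\<bar>"
    using q ub[of x] mult_left_mono[OF ub[of x] q(1)] by linarith
  ultimately show ?thesis
    using q(1) unfolding q_def [symmetric]
    by (auto simp: abs_mult intro!: order.trans[OF abs_triangle_ineq] add_mono)
qed

lemma integral_abs_upwind_euler_step_le:
  fixes y u :: "real \<Rightarrow> real"
  assumes e: "e > 0" and h: "0 \<le> h" "h * M \<le> e" and p: "p > 0"
    and yc: "continuous_on UNIV y" and uc: "continuous_on UNIV u"
    and yp: "\<And>x. y (x + p) = y x" and up: "\<And>x. u (x + p) = u x"
    and ub: "\<And>x. \<bar>u x\<bar> \<le> M"
  shows "integral {a..a+p} (\<lambda>x. \<bar>y x + h * upwind e u y x\<bar>) \<le> integral {a..a+p} (\<lambda>x. \<bar>y x\<bar>)"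
proof -
  \<comment> \<open>The mass the Euler step moves out of each point reappears shifted by \<open>\<plusminus>e\<close>,
     and shifts do not change integrals over a period.\<close>
  define q where "q = h / e"
  define g1 where "g1 x = \<bar>y x\<bar> * max 0 (u x)" for x
  define g2 where "g2 x = \<bar>y x\<bar> * max 0 (- u x)" for x
  have g1c: "continuous_on UNIV g1" and g2c: "continuous_on UNIV g2"
    unfolding g1_def g2_def by (intro continuous_intros yc uc)+
  have g1p: "g1 (x + p) = g1 x" and g2p: "g2 (x + p) = g2 x" for x
    by (simp_all add: g1_def g2_def yp up)
  have int: "f integrable_on {a..a+p}" if "continuous_on UNIV f" for f :: "real \<Rightarrow> real"
    by (rule integrable_continuous_real) (rule continuous_on_subset[OF that], simp)
  define b where "b x = \<bar>y x\<bar> - q * (g1 x + g2 x) + q * g1 (x - e) + q * g2 (x + e)" for x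
  have pointwise: "\<bar>y x + h * upwind e u y x\<bar> \<le> b x" for x
  proof -
    have "\<bar>u x\<bar> = max 0 (u x) + max 0 (- u x)" by (simp add: max_def)
    then show ?thesis
      using abs_upwind_euler_step_le[where u=u and y=y and x=x, OF e h ub] by (simp add: b_def g1_def g2_def q_def algebra_simps)
  qed
  have shift_cont: "continuous_on UNIV (\<lambda>x. y (x + c))" "continuous_on UNIV (\<lambda>x. u (x + c))"
      "continuous_on UNIV (\<lambda>x. g1 (x + c))" "continuous_on UNIV (\<lambda>x. g2 (x + c))" for c
    by (intro continuous_on_compose2[OF yc] continuous_on_compose2[OF uc] continuous_on_compose2[OF g1c]
        continuous_on_compose2[OF g2c] continuous_intros; simp)+
  have "(\<lambda>x. \<bar>y x + h * upwind e u y x\<bar>) integrable_on {a..a+p}"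
    unfolding upwind_def diff_conv_add_uminus
    by (intro int continuous_intros shift_cont yc uc)
  moreover have "b integrable_on {a..a+p}"
    unfolding b_def diff_conv_add_uminus by (intro int continuous_intros shift_cont yc uc g1c g2c)
  ultimately have "integral {a..a+p} (\<lambda>x. \<bar>y x + h * upwind e u y x\<bar>) \<le> integral {a..a+p} b"
    using pointwise by (rule Henstock_Kurzweil_Integration.integral_le)
  also have "integral {a..a+p} b = integral {a..a+p} (\<lambda>x. \<bar>y x\<bar>)"
  proof -
    have hi: "(f has_integral integral {a..a+p} f) {a..a+p}" if "continuous_on UNIV f" for f :: "real \<Rightarrow> real"
      using integrable_integral[OF int[OF that]] .
    have "((\<lambda>x. g1 (x - e)) has_integral integral {a..a+p} g1) {a..a+p}"
      "((\<lambda>x. g2 (x + e)) has_integral integral {a..a+p} g2) {a..a+p}"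
      using hi[OF shift_cont(3)[of "- e"]] hi[OF shift_cont(4)[of e]]
      by (simp_all add: integral_period_shift[OF g1c g1p p, of a "- e", simplified]
          integral_period_shift[OF g2c g2p p])
    then have "(b has_integral integral {a..a+p} (\<lambda>x. \<bar>y x\<bar>)
        - q * (integral {a..a+p} g1 + integral {a..a+p} g2)
        + q * integral {a..a+p} g1 + q * integral {a..a+p} g2) {a..a+p}"
      unfolding b_def
      by (intro has_integral_add has_integral_diff has_integral_mult_right hi g1c g2c
          continuous_intros yc)
    then show ?thesis by (simp add: integral_unique algebra_simps)
  qed
  finally show ?thesis .
qed

definition bcontfun_shift :: "real \<Rightarrow> (real \<Rightarrow>\<^sub>C real) \<Rightarrow> (real \<Rightarrow>\<^sub>C real)" where
  "bcontfun_shift c F = Bcontfun (\<lambda>x. F (x + c))"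

lemma bcontfun_shift_apply [simp]: "apply_bcontfun (bcontfun_shift c F) x = F (x + c)"
proof -
  have "continuous_on UNIV (\<lambda>x. F (x + c))"
    by (intro continuous_on_compose2[OF continuous_on_apply_bcontfun[of UNIV F]] continuous_intros)
      auto
  then have "(\<lambda>x. F (x + c)) \<in> bcontfun"
    by (intro bcontfun_normI[where b="norm F"])
      (auto simp: norm_bounded[of F, unfolded real_norm_def])
  then show ?thesis by (simp add: bcontfun_shift_def Bcontfun_inverse)
qed

lemma bounded_linear_bcontfun_shift: "bounded_linear (bcontfun_shift c)"
proof (rule bounded_linear_intro[where K=1])
  show "bcontfun_shift c (F + G) = bcontfun_shift c F + bcontfun_shift c G" for F G
    by (rule bcontfun_eqI) simp
  show "bcontfun_shift c (r *\<^sub>R F) = r *\<^sub>R bcontfun_shift c F" for r F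
    by (rule bcontfun_eqI) simp
  show "norm (bcontfun_shift c F) \<le> norm F * 1" for F
    by (simp, rule norm_bound) (simp add: norm_bounded[of F, unfolded real_norm_def])
qed

definition period_L1 :: "(real \<Rightarrow>\<^sub>C real) \<Rightarrow> real" where
  "period_L1 F = integral {-pi..pi} (\<lambda>x. \<bar>F x\<bar>)"

lemma period_L1_le_add_norm: "period_L1 F \<le> period_L1 G + 2 * pi * norm (F - G)"
proof -
  have "period_L1 F \<le> integral {-pi..pi} (\<lambda>x. \<bar>G x\<bar> + norm (F - G))"
    unfolding period_L1_def
  proof (rule Henstock_Kurzweil_Integration.integral_le)
    fix x
    have "\<bar>F x - G x\<bar> \<le> norm (F - G)" using norm_bounded[of "F - G" x] by simp
    then show "\<bar>F x\<bar> \<le> \<bar>G x\<bar> + norm (F - G)" by linarith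
  qed (auto intro!: integrable_continuous_real continuous_intros)
  also have "\<dots> = period_L1 G + 2 * pi * norm (F - G)"
    unfolding period_L1_def
    by (subst Henstock_Kurzweil_Integration.integral_add)
       (auto intro!: integrable_continuous_real continuous_intros)
  finally show ?thesis .
qed

locale upwind_flow =
  fixes e M :: real and U Y Y' :: "real \<Rightarrow> (real \<Rightarrow>\<^sub>C real)"
  assumes e_pos: "e > 0" and M_pos: "M > 0"
    and U_bound: "\<And>t x. t \<ge> 0 \<Longrightarrow> \<bar>U t x\<bar> \<le> M"
    and U_periodic: "\<And>t x. t \<ge> 0 \<Longrightarrow> U t (x + 2 * pi) = U t x"
    and Y_deriv: "\<And>t. t \<ge> 0 \<Longrightarrow> (Y has_vector_derivative Y' t) (at t within {0..})"
    and Y'_eq: "\<And>t x. t \<ge> 0 \<Longrightarrow> Y' t x = upwind e (U t) (Y t) x"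
    and Y0_periodic: "\<And>x. Y 0 (x + 2 * pi) = Y 0 x"
begin

lemma Y_periodic:
  assumes t: "t \<ge> 0"
  shows "Y t (x + 2 * pi) = Y t x"
proof -
  define Z where "Z s = bcontfun_shift (2 * pi) (Y s) - Y s" for s
  define Z' where "Z' s = bcontfun_shift (2 * pi) (Y' s) - Y' s" for s
  have der: "(Z has_vector_derivative Z' s) (at s within {0..})" if "s \<ge> 0" for s
    unfolding Z_def Z'_def
    by (intro has_vector_derivative_diff bounded_linear.has_vector_derivative[OF
          bounded_linear_bcontfun_shift] Y_deriv that)
  have bound: "norm (Z' s) \<le> 3 * M / e * norm (Z s)" if s: "s \<ge> 0" for s
  proof (rule norm_bound)
    fix x
    have "Z' s x = Y' s (x + 2 * pi) - Y' s x"
      by (simp add: Z'_def)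
    also have "\<dots> = upwind e (U s) (Y s) (x + 2 * pi) - upwind e (U s) (Y s) x"
      by (simp only: Y'_eq[OF s])
    also have "\<dots> = upwind e (U s) (\<lambda>z. Y s (z + 2 * pi) - Y s z) x"
      using U_periodic[OF s] by (rule upwind_periodic_diff)
    also have "(\<lambda>z. Y s (z + 2 * pi) - Y s z) = Z s"
      by (rule ext) (simp add: Z_def)
    finally show "norm (Z' s x) \<le> 3 * M / e * norm (Z s)"
      using upwind_abs_le[OF e_pos U_bound[OF s], where y="apply_bcontfun (Z s)" and B="norm (Z s)"]
        norm_bounded[of "Z s"] by simp
  qed
  have Z0: "Z 0 = 0" by (rule bcontfun_eqI) (simp add: Z_def Y0_periodic)
  have K: "3 * M / e \<ge> 0" using e_pos M_pos by simp
  have "Z t = 0" by (rule vanishes_of_derivative_norm_bound[OF der K bound Z0 t])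
  then have "Z t x = 0" by simp
  then show ?thesis by (simp add: Z_def)
qed

lemma period_L1_le_initial:
  assumes t: "t \<ge> 0"
  shows "period_L1 (Y t) \<le> period_L1 (Y 0)"
proof -
  have euler: "\<exists>h\<^sub>0>0. \<forall>h. 0 < h \<and> h < h\<^sub>0 \<longrightarrow>
      period_L1 (Y s + h *\<^sub>R Y' s) \<le> period_L1 (Y s) + h * 0 * (period_L1 (Y s) - period_L1 (Y 0))"
    if s: "s \<ge> 0" for s
  proof -
    have "period_L1 (Y s + h *\<^sub>R Y' s) \<le> period_L1 (Y s)" if h: "0 < h" "h < e / M" for h
    proof -
      have "period_L1 (Y s + h *\<^sub>R Y' s)
          = integral {-pi..-pi + 2 * pi} (\<lambda>x. \<bar>Y s x + h * upwind e (U s) (Y s) x\<bar>)"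
        by (simp add: period_L1_def Y'_eq[OF s])
      also have "\<dots> \<le> integral {-pi..-pi + 2 * pi} (\<lambda>x. \<bar>Y s x\<bar>)"
        using h e_pos M_pos Y_periodic[OF s] U_periodic[OF s] U_bound[OF s]
        by (intro integral_abs_upwind_euler_step_le) (auto simp: field_simps)
      finally show ?thesis by (simp add: period_L1_def)
    qed
    then show ?thesis using e_pos M_pos by (intro exI[of _ "e / M"]) auto
  qed
  have two_pi: "(0::real) < 2 * pi" by simp
  show ?thesis
    by (rule le_initial_of_euler_step_bound[OF Y_deriv two_pi period_L1_le_add_norm order_refl euler t])
qed

lemma integral_abs_le_initial:
  assumes t: "t \<ge> 0"
  shows "integral {-pi - 2 * pi * real m..pi + 2 * pi * real m} (\<lambda>x. \<bar>Y t x\<bar>)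
      \<le> real (2 * m + 1) * period_L1 (Y 0)"
proof -
  have "{-pi - 2 * pi * real m..pi + 2 * pi * real m}
      = {-pi - 2 * pi * real m..(-pi - 2 * pi * real m) + real (2 * m + 1) * (2 * pi)}"
    by (simp add: algebra_simps)
  also have "integral \<dots> (\<lambda>x. \<bar>Y t x\<bar>)
      = real (2 * m + 1) * integral {-pi - 2 * pi * real m..(-pi - 2 * pi * real m) + 2 * pi} (\<lambda>x. \<bar>Y t x\<bar>)"
    by (rule integral_period_multiple) (auto intro!: continuous_intros simp: Y_periodic[OF t])
  also have "integral {-pi - 2 * pi * real m..(-pi - 2 * pi * real m) + 2 * pi} (\<lambda>x. \<bar>Y t x\<bar>)
      = period_L1 (Y t)"
    unfolding period_L1_def
    using integral_period_translate[of "\<lambda>x. \<bar>Y t x\<bar>" "2 * pi" "-pi - 2 * pi * real m" "-pi"]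
    by (simp add: Y_periodic[OF t] continuous_intros)
  finally show ?thesis
    using period_L1_le_initial[OF t] by (simp add: mult_left_mono)
qed

end

section \<open>The weak residual\<close>

lemma upwind_weight_abs_le:
  fixes v w d p q \<delta> \<Lambda> M P :: real
  assumes p: "\<bar>p - d\<bar> \<le> \<delta>" and q: "\<bar>q + d\<bar> \<le> \<delta>" and v: "\<bar>v\<bar> \<le> M"
    and vw: "\<bar>v - w\<bar> \<le> \<Lambda>" and d: "\<bar>d\<bar> \<le> P"
  shows "\<bar>max 0 v * p + max 0 (- v) * q - w * d\<bar> \<le> \<Lambda> * P + 2 * M * \<delta>"
proof -
  have "max 0 v * p + max 0 (- v) * q - w * d = (v - w) * d + max 0 v * (p - d) + max 0 (- v) * (q + d)"
    by (simp add: max_def algebra_simps)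
  moreover have "\<bar>(v - w) * d\<bar> \<le> \<Lambda> * P"
    unfolding abs_mult by (rule mult_mono[OF vw d]) (use vw in auto)
  moreover have "\<bar>max 0 v\<bar> \<le> M" "\<bar>max 0 (- v)\<bar> \<le> M" using v by auto
  then have "\<bar>max 0 v * (p - d)\<bar> \<le> M * \<delta>" "\<bar>max 0 (- v) * (q + d)\<bar> \<le> M * \<delta>"
    unfolding abs_mult using p q by (auto intro!: mult_mono)
  ultimately show ?thesis by (simp add: abs_le_iff)
qed

lemma conv_upwind:
  assumes kernel: "supported_kernel \<phi> r" and a: "a > 0"
    and Yc: "continuous_on UNIV Y" and Uc: "continuous_on UNIV U"
  shows "conv (upwind e U Y) (mollifier a \<phi>) x
    = (conv (\<lambda>y. Y y * max 0 (U y)) (mollifier a \<phi>) (x - e)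
       - conv (\<lambda>y. Y y * \<bar>U y\<bar>) (mollifier a \<phi>) x
       + conv (\<lambda>y. Y y * max 0 (- U y)) (mollifier a \<phi>) (x + e)) / e"
proof -
  define Wp where "Wp y = Y y * max 0 (U y)" for y
  define Wm where "Wm y = Y y * max 0 (- U y)" for y
  define V where "V y = Y y * \<bar>U y\<bar>" for y
  have Wpc: "continuous_on UNIV Wp" and Wmc: "continuous_on UNIV Wm" and Vc: "continuous_on UNIV V"
    unfolding Wp_def Wm_def V_def by (intro continuous_intros Yc Uc)+
  have sh: "continuous_on UNIV (\<lambda>y. F (y + c))" if "continuous_on UNIV F" for F :: "real \<Rightarrow> real" and c
    by (rule continuous_on_compose2[OF that]) (auto intro: continuous_intros)
  have "upwind e U Y = (\<lambda>y. (1/e) * Wp (y + - e) + (- (1/e)) * V y + (1/e) * Wm (y + e))"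
    by (rule ext) (simp add: upwind_def Wp_def Wm_def V_def algebra_simps)
  then have "conv (upwind e U Y) (mollifier a \<phi>) x
      = (1/e) * conv Wp (mollifier a \<phi>) (x + - e) + (- (1/e)) * conv V (mollifier a \<phi>) x
        + (1/e) * conv Wm (mollifier a \<phi>) (x + e)"
    by (simp only: conv_lincomb3[OF kernel a sh[OF Wpc] Vc sh[OF Wmc]] conv_shift[OF kernel a Wpc]
        conv_shift[OF kernel a Wmc])
  then show ?thesis
    by (simp add: Wp_def[abs_def] Wm_def[abs_def] V_def[abs_def] add_divide_distrib diff_divide_distrib)
qed

lemma integral_weak_residual_eq:
  fixes Y U psi psi1 \<phi> :: "real \<Rightarrow> real"
  assumes kernel: "supported_kernel \<phi> r" and a: "a > 0" and e: "0 < e" "e \<le> 1"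
    and Yc: "continuous_on UNIV Y" and Uc: "continuous_on UNIV U"
    and psic: "continuous_on UNIV psi" and psi1c: "continuous_on UNIV psi1"
    and pz: "\<And>x. R < \<bar>x\<bar> \<Longrightarrow> psi x = 0" and p1z: "\<And>x. R < \<bar>x\<bar> \<Longrightarrow> psi1 x = 0"
  shows "integral UNIV (\<lambda>x. conv (upwind e U Y) (mollifier a \<phi>) x * psi x
           - U x * conv Y (mollifier a \<phi>) x * psi1 x)
    = integral {-R-1..R+1} (\<lambda>x.
         (conv (\<lambda>y. Y y * max 0 (U y)) (mollifier a \<phi>) x * psi (x + e)
          - conv (\<lambda>y. Y y * \<bar>U y\<bar>) (mollifier a \<phi>) x * psi x
          + conv (\<lambda>y. Y y * max 0 (- U y)) (mollifier a \<phi>) x * psi (x - e)) / e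
         - U x * conv Y (mollifier a \<phi>) x * psi1 x)"
    (is "integral UNIV ?g = integral ?J ?h")
proof -
  \<comment> \<open>Discrete summation by parts: the lattice shifts of the fluxes are moved onto \<open>psi\<close>.\<close>
  define Cp where "Cp = conv (\<lambda>y. Y y * max 0 (U y)) (mollifier a \<phi>)"
  define CV where "CV = conv (\<lambda>y. Y y * \<bar>U y\<bar>) (mollifier a \<phi>)"
  define Cm where "Cm = conv (\<lambda>y. Y y * max 0 (- U y)) (mollifier a \<phi>)"
  define CY where "CY = conv Y (mollifier a \<phi>)"
  have cont: "continuous_on UNIV Cp" "continuous_on UNIV CV" "continuous_on UNIV Cm"
      "continuous_on UNIV CY"
    unfolding Cp_def CV_def Cm_def CY_def by (intro continuous_on_conv[OF kernel a] continuous_intros Yc Uc)+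
  have shift: "continuous_on UNIV (\<lambda>x. F (x + c))" if "continuous_on UNIV F" for F :: "real \<Rightarrow> real" and c
    by (rule continuous_on_compose2[OF that]) (auto intro: continuous_intros)
  have lin: "integral {c..d} (\<lambda>x. (f1 x - f2 x + f3 x) / e - f4 x)
      = (integral {c..d} f1 - integral {c..d} f2 + integral {c..d} f3) / e - integral {c..d} f4"
    if "continuous_on UNIV f1" "continuous_on UNIV f2" "continuous_on UNIV f3" "continuous_on UNIV f4"
    for f1 f2 f3 f4 :: "real \<Rightarrow> real" and c d
    using that
    by (intro integral_unique has_integral_diff has_integral_add has_integral_divide
        integrable_integral integrable_continuous_real continuous_on_subset[OF that(1)]
        continuous_on_subset[OF that(2)] continuous_on_subset[OF that(3)]
        continuous_on_subset[OF that(4)] subset_UNIV)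
  have "integral UNIV ?g = integral {-R..R} ?g"
    by (rule integral_UNIV_eq_Icc) (auto simp: pz p1z)
  also have "\<dots> = integral {-R..R} (\<lambda>x. (Cp (x + - e) * psi x - CV x * psi x + Cm (x + e) * psi x) / e
      - U x * CY x * psi1 x)"
    unfolding conv_upwind[OF kernel a Yc Uc] Cp_def CV_def Cm_def CY_def
    by (simp add: diff_divide_distrib add_divide_distrib algebra_simps)
  also have "\<dots> = (integral {-R..R} (\<lambda>x. Cp (x + - e) * psi x) - integral {-R..R} (\<lambda>x. CV x * psi x)
      + integral {-R..R} (\<lambda>x. Cm (x + e) * psi x)) / e - integral {-R..R} (\<lambda>x. U x * CY x * psi1 x)"
    by (intro lin continuous_intros shift cont psic psi1c Uc)
  also have "\<dots> = (integral ?J (\<lambda>x. Cp x * psi (x + e)) - integral ?J (\<lambda>x. CV x * psi x)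
      + integral ?J (\<lambda>x. Cm x * psi (x - e))) / e - integral ?J (\<lambda>x. U x * CY x * psi1 x)"
  proof -
    have superset: "integral {-R..R} f = integral ?J f"
      if "\<And>x. R < \<bar>x\<bar> \<Longrightarrow> f x = 0" for f :: "real \<Rightarrow> real"
      by (rule integral_Icc_eq_superset) (auto intro!: that)
    have "integral {-R..R} (\<lambda>x. Cp (x + - e) * psi x) = integral ?J (\<lambda>x. Cp x * psi (x + e))"
      using integral_translate_onto_factor[OF pz, where c="- e" and F=Cp] e by simp
    moreover have "integral {-R..R} (\<lambda>x. Cm (x + e) * psi x) = integral ?J (\<lambda>x. Cm x * psi (x - e))"
      using integral_translate_onto_factor[OF pz, where c=e and F=Cm] e by simp
    moreover have "integral {-R..R} (\<lambda>x. CV x * psi x) = integral ?J (\<lambda>x. CV x * psi x)"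
      "integral {-R..R} (\<lambda>x. U x * CY x * psi1 x) = integral ?J (\<lambda>x. U x * CY x * psi1 x)"
      by (auto intro!: superset simp: pz p1z)
    ultimately show ?thesis by (simp only:)
  qed
  also have "\<dots> = integral ?J ?h"
    unfolding Cp_def [symmetric] CV_def [symmetric] Cm_def [symmetric] CY_def [symmetric]
    by (intro lin [symmetric] continuous_intros shift cont psic psi1c Uc
        continuous_on_compose2[OF psic] subset_UNIV)
  finally show ?thesis .
qed

lemma abs_dual_upwind_conv_le:
  fixes Y U psi psi1 psi2 \<phi> :: "real \<Rightarrow> real"
  assumes kernel: "supported_kernel \<phi> r" and a: "a > 0" and e: "e > 0"
    and Yc: "continuous_on UNIV Y" and Uc: "continuous_on UNIV U"
    and Ub: "\<And>y. \<bar>U y\<bar> \<le> M" and L: "L \<ge> 0" and Ulip: "\<And>x y. \<bar>U y - U x\<bar> \<le> L * \<bar>y - x\<bar>"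
    and d1: "\<And>x. (psi has_real_derivative psi1 x) (at x)"
    and d2: "\<And>x. (psi1 has_real_derivative psi2 x) (at x)"
    and P1: "\<And>x. \<bar>psi1 x\<bar> \<le> P1" and P2: "\<And>x. \<bar>psi2 x\<bar> \<le> P2"
    and box: "c \<le> x - a * r" "x + a * r \<le> d"
  shows "\<bar>(conv (\<lambda>y. Y y * max 0 (U y)) (mollifier a \<phi>) x * psi (x + e)
          - conv (\<lambda>y. Y y * \<bar>U y\<bar>) (mollifier a \<phi>) x * psi x
          + conv (\<lambda>y. Y y * max 0 (- U y)) (mollifier a \<phi>) x * psi (x - e)) / e
         - U x * conv Y (mollifier a \<phi>) x * psi1 x\<bar>
    \<le> (L * a * r * P1 + 2 * M * e * P2) * integral {c..d} (\<lambda>y. \<bar>Y y\<bar> * \<bar>mollifier a \<phi> (x - y)\<bar>)"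
    (is "\<bar>?h\<bar> \<le> ?\<kappa> * _")
proof -
  let ?m = "mollifier a \<phi>"
  define Wp where "Wp y = Y y * max 0 (U y)" for y
  define Wm where "Wm y = Y y * max 0 (- U y)" for y
  have Wpc: "continuous_on UNIV Wp" and Wmc: "continuous_on UNIV Wm"
    unfolding Wp_def Wm_def by (intro continuous_intros Yc Uc)+
  define p where "p = (psi (x + e) - psi x) / e"
  define q where "q = (psi (x - e) - psi x) / e"
  define K where "K y = p * Wp y + q * Wm y + (- (U x * psi1 x)) * Y y" for y
  have "(\<lambda>y. Y y * \<bar>U y\<bar>) = (\<lambda>y. 1 * Wp y + 1 * Wm y + 0 * Y y)"
    by (rule ext) (simp add: Wp_def Wm_def max_def algebra_simps)
  then have "conv (\<lambda>y. Y y * \<bar>U y\<bar>) ?m x = conv Wp ?m x + conv Wm ?m x"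
    using conv_lincomb3[OF kernel a Wpc Wmc Yc, of 1 1 0 x] by simp
  then have "?h = p * conv Wp ?m x + q * conv Wm ?m x + (- (U x * psi1 x)) * conv Y ?m x"
    using e unfolding p_def q_def Wp_def [abs_def] Wm_def [abs_def] by (simp add: field_simps)
  also have "\<dots> = conv K ?m x"
    unfolding K_def by (rule conv_lincomb3[OF kernel a Wpc Wmc Yc, symmetric])
  finally have hK: "?h = conv K ?m x" .
  \<comment> \<open>Near \<open>x\<close> the weight of \<open>Y y\<close> in \<open>K y\<close> is small: the difference quotients are close to
     \<open>\<plusminus>psi1 x\<close>, and \<open>U\<close> varies by at most \<open>L * a * r\<close> over the support of the kernel.\<close>
  have p: "\<bar>p - psi1 x\<bar> \<le> e * P2"
    using difference_quotient_error_le[OF d1 d2 P2, of e x] e by (simp add: p_def)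
  have q: "\<bar>q + psi1 x\<bar> \<le> e * P2"
  proof -
    have "q + psi1 x = - ((psi (x + - e) - psi x) / (- e) - psi1 x)"
      using e by (simp add: q_def field_simps)
    then show ?thesis
      using difference_quotient_error_le[OF d1 d2 P2, of "- e" x] e by simp
  qed
  have kb: "\<bar>K y\<bar> \<le> ?\<kappa> * \<bar>Y y\<bar>" if xy: "\<bar>x - y\<bar> \<le> a * r" for y
  proof -
    have "\<bar>U y - U x\<bar> \<le> L * a * r"
      using Ulip[of x y] mult_left_mono[OF xy L] by (simp add: abs_minus_commute mult.assoc)
    then have "\<bar>max 0 (U y) * p + max 0 (- U y) * q - U x * psi1 x\<bar> \<le> L * a * r * P1 + 2 * M * (e * P2)"
      by (rule upwind_weight_abs_le[OF p q Ub _ P1])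
    then have "\<bar>max 0 (U y) * p + max 0 (- U y) * q - U x * psi1 x\<bar> \<le> ?\<kappa>"
      by (simp add: mult.assoc)
    moreover have "K y = Y y * (max 0 (U y) * p + max 0 (- U y) * q - U x * psi1 x)"
      by (simp add: K_def Wp_def Wm_def algebra_simps)
    ultimately show ?thesis
      by (simp add: abs_mult mult.commute mult_left_mono)
  qed
  show ?thesis
    unfolding hK by (rule abs_conv_le[OF kernel a Yc _ box kb]) (simp add: K_def continuous_intros Wpc Wmc Yc)
qed

lemma abs_integral_weak_residual_le:
  fixes Y U psi psi1 psi2 \<phi> :: "real \<Rightarrow> real"
  assumes kernel: "supported_kernel \<phi> r" and a: "a > 0" and ar: "a * r \<le> 1" and e: "0 < e" "e \<le> 1"
    and Yc: "continuous_on UNIV Y" and Uc: "continuous_on UNIV U"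
    and Ub: "\<And>y. \<bar>U y\<bar> \<le> M" and L: "L \<ge> 0" and Ulip: "\<And>x y. \<bar>U y - U x\<bar> \<le> L * \<bar>y - x\<bar>"
    and d1: "\<And>x. (psi has_real_derivative psi1 x) (at x)"
    and d2: "\<And>x. (psi1 has_real_derivative psi2 x) (at x)"
    and P1: "\<And>x. \<bar>psi1 x\<bar> \<le> P1" and P2: "\<And>x. \<bar>psi2 x\<bar> \<le> P2"
    and pz: "\<And>x. R < \<bar>x\<bar> \<Longrightarrow> psi x = 0" and p1z: "\<And>x. R < \<bar>x\<bar> \<Longrightarrow> psi1 x = 0"
    and Pm: "\<And>z. \<bar>\<phi> z\<bar> \<le> Pm"
  shows "\<bar>integral UNIV (\<lambda>x. conv (upwind e U Y) (mollifier a \<phi>) x * psi x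
           - U x * conv Y (mollifier a \<phi>) x * psi1 x)\<bar>
    \<le> (L * a * r * P1 + 2 * M * e * P2) * (2 * r * Pm) * integral {-R-3..R+3} (\<lambda>y. \<bar>Y y\<bar>)"
proof -
  let ?m = "mollifier a \<phi>"
  define \<kappa> where "\<kappa> = L * a * r * P1 + 2 * M * e * P2"
  define J where "J = {-R-1..R+1}"
  define Q where "Q x = integral {-R-3..R+3} (\<lambda>y. \<bar>Y y\<bar> * \<bar>?m (x - y)\<bar>)" for x
  define h where "h x = (conv (\<lambda>y. Y y * max 0 (U y)) ?m x * psi (x + e)
      - conv (\<lambda>y. Y y * \<bar>U y\<bar>) ?m x * psi x + conv (\<lambda>y. Y y * max 0 (- U y)) ?m x * psi (x - e)) / e
      - U x * conv Y ?m x * psi1 x" for x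
  have psic: "continuous_on UNIV psi" and psi1c: "continuous_on UNIV psi1"
    using d1 d2 by (metis DERIV_isCont continuous_at_imp_continuous_on)+
  have eq: "integral UNIV (\<lambda>x. conv (upwind e U Y) ?m x * psi x - U x * conv Y ?m x * psi1 x)
      = integral J h"
    unfolding J_def h_def by (rule integral_weak_residual_eq[where R=R, OF kernel a e Yc Uc psic psi1c pz p1z])
  have "\<kappa> \<ge> 0"
    using L a kernel Ub[of 0] P1[of 0] P2[of 0] e by (simp add: \<kappa>_def supported_kernel_def)
  have conv_cont: "continuous_on S (conv F ?m)" if "continuous_on UNIV F" for F S
    using continuous_on_subset[OF continuous_on_conv[OF kernel a that]] by simp
  have "h integrable_on J"
    unfolding h_def J_def using e
    by (intro integrable_continuous_real continuous_intros conv_cont Yc Uc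
        continuous_on_subset[OF psi1c] continuous_on_subset[OF Uc] continuous_on_compose2[OF psic]
        subset_UNIV) auto
  moreover have "(\<lambda>x. \<kappa> * Q x) integrable_on J"
  proof -
    have "continuous_on (J \<times> {-R-3..R+3}) (\<lambda>z. \<bar>Y (snd z)\<bar> * \<bar>?m (fst z - snd z)\<bar>)"
      by (intro continuous_intros continuous_on_compose2[OF Yc]
          continuous_on_mollifier_compose[OF kernel]) auto
    then have "continuous_on J Q"
      unfolding Q_def
      by (intro integral_continuous_on_param[where a="-R-3" and b="R+3", simplified])
        (simp add: case_prod_beta)
    then show ?thesis
      unfolding J_def by (intro integrable_continuous_real continuous_intros)
  qed
  moreover have "norm (h x) \<le> \<kappa> * Q x" if "x \<in> J" for x
    unfolding h_def \<kappa>_def Q_def real_norm_def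
    using that ar e
    by (intro abs_dual_upwind_conv_le[OF kernel a _ Yc Uc Ub L Ulip d1 d2 P1 P2]) (auto simp: J_def)
  ultimately have "\<bar>integral J h\<bar> \<le> integral J (\<lambda>x. \<kappa> * Q x)"
    by (metis integral_norm_bound_integral real_norm_def)
  also have "\<dots> = \<kappa> * integral J Q" by simp
  also have "\<dots> \<le> \<kappa> * (2 * r * Pm * integral {-R-3..R+3} (\<lambda>y. \<bar>Y y\<bar>))"
    unfolding J_def Q_def
    by (intro mult_left_mono iterated_integral_abs_mollifier_le[OF kernel a Pm Yc] \<open>\<kappa> \<ge> 0\<close>)
  finally show ?thesis
    unfolding eq by (simp add: \<kappa>_def mult.assoc)
qed

lemma (in upwind_flow) abs_integral_weak_residual_le_initial:
  fixes psi psi1 psi2 \<phi> :: "real \<Rightarrow> real"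
  assumes kernel: "supported_kernel \<phi> r" and a: "a > 0" and ar: "a * r \<le> 1" and e1: "e \<le> 1"
    and t: "t \<ge> 0" and L: "L \<ge> 0" and Ulip: "\<And>x y. \<bar>U t y - U t x\<bar> \<le> L * \<bar>y - x\<bar>"
    and d1: "\<And>x. (psi has_real_derivative psi1 x) (at x)"
    and d2: "\<And>x. (psi1 has_real_derivative psi2 x) (at x)"
    and P1: "\<And>x. \<bar>psi1 x\<bar> \<le> P1" and P2: "\<And>x. \<bar>psi2 x\<bar> \<le> P2"
    and pz: "\<And>x. R < \<bar>x\<bar> \<Longrightarrow> psi x = 0" and p1z: "\<And>x. R < \<bar>x\<bar> \<Longrightarrow> psi1 x = 0"
    and Pm: "\<And>z. \<bar>\<phi> z\<bar> \<le> Pm"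
  shows "\<bar>integral UNIV (\<lambda>x. vector_derivative (\<lambda>s. conv (\<lambda>y. Y s y) (mollifier a \<phi>) x) (at t within {0..})
           * psi x - U t x * conv (\<lambda>y. Y t y) (mollifier a \<phi>) x * psi1 x)\<bar>
    \<le> (L * a * r * P1 + 2 * M * e * P2) * (2 * r * Pm) * (real (2 * nat \<lceil>R + 3\<rceil> + 1) * period_L1 (Y 0))"
proof -
  define m where "m = nat \<lceil>R + 3\<rceil>"
  have "(\<lambda>y. Y' t y) = upwind e (U t) (Y t)" using Y'_eq[OF t] by auto
  then have "vector_derivative (\<lambda>s. conv (\<lambda>y. Y s y) (mollifier a \<phi>) x) (at t within {0..})
      = conv (upwind e (U t) (Y t)) (mollifier a \<phi>) x" for x
    using vector_derivative_conv[OF kernel a Y_deriv[OF t] t] by simp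
  then have "\<bar>integral UNIV (\<lambda>x. vector_derivative (\<lambda>s. conv (\<lambda>y. Y s y) (mollifier a \<phi>) x) (at t within {0..})
           * psi x - U t x * conv (\<lambda>y. Y t y) (mollifier a \<phi>) x * psi1 x)\<bar>
      \<le> (L * a * r * P1 + 2 * M * e * P2) * (2 * r * Pm) * integral {-R-3..R+3} (\<lambda>y. \<bar>Y t y\<bar>)"
    using abs_integral_weak_residual_le[OF kernel a ar e_pos e1 _ _ U_bound[OF t] L Ulip d1 d2 P1 P2 pz p1z Pm]
    by simp
  also have "\<dots> \<le> (L * a * r * P1 + 2 * M * e * P2) * (2 * r * Pm) * (real (2 * m + 1) * period_L1 (Y 0))"
  proof (intro mult_left_mono)
    have "R + 3 \<le> real m" unfolding m_def by linarith
    also have "\<dots> \<le> pi + 2 * pi * real m"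
      using mult_right_mono[of 1 "2 * pi" "real m"] pi_gt3 by simp
    finally have "{-R-3..R+3} \<subseteq> {-pi - 2 * pi * real m..pi + 2 * pi * real m}" by auto
    then have "integral {-R-3..R+3} (\<lambda>y. \<bar>Y t y\<bar>)
        \<le> integral {-pi - 2 * pi * real m..pi + 2 * pi * real m} (\<lambda>y. \<bar>Y t y\<bar>)"
      by (rule integral_subset_le) (auto intro!: integrable_continuous_real continuous_intros)
    then show "integral {-R-3..R+3} (\<lambda>y. \<bar>Y t y\<bar>) \<le> real (2 * m + 1) * period_L1 (Y 0)"
      using integral_abs_le_initial[OF t, of m] by linarith
    show "0 \<le> (L * a * r * P1 + 2 * M * e * P2) * (2 * r * Pm)"
      using L a kernel e_pos M_pos P1[of 0] P2[of 0] Pm[of 0] by (simp add: supported_kernel_def)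
  qed
  finally show ?thesis by (simp only: m_def)
qed

lemma tendsto_zero_at_right_of_powr_bound:
  fixes f :: "real \<Rightarrow> real"
  assumes \<gamma>: "\<gamma> > 0"
    and bound: "\<forall>\<^sub>F e in at_right 0. \<bar>f e\<bar> \<le> (A * e powr \<gamma> + B * e) * K"
  shows "(f \<longlongrightarrow> 0) (at_right 0)"
proof -
  have "((\<lambda>e::real. e powr \<gamma>) \<longlongrightarrow> 0) (at_right 0)"
    by (rule tendsto_zero_powrI)
      (auto intro!: tendsto_ident_at eventually_at_rightI[of 0 1] simp: \<gamma>)
  then have "((\<lambda>e. (A * e powr \<gamma> + B * e) * K) \<longlongrightarrow> (A * 0 + B * 0) * K) (at_right 0)"
    by (intro tendsto_mult tendsto_add tendsto_const tendsto_ident_at)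
  then have lim: "((\<lambda>e. (A * e powr \<gamma> + B * e) * K) \<longlongrightarrow> 0) (at_right 0)" by simp
  have "\<forall>\<^sub>F e in at_right 0. norm (f e) \<le> (A * e powr \<gamma> + B * e) * K"
    using bound by simp
  then show ?thesis by (rule Lim_null_comparison[OF _ lim])
qed

lemma eventually_at_right_powr_small:
  fixes \<alpha> r :: real
  assumes "\<alpha> > 0" "r > 0"
  shows "\<forall>\<^sub>F e in at_right 0. 0 < e \<and> e < 1 \<and> e powr \<alpha> * r \<le> 1"
proof -
  have "((\<lambda>e::real. e powr \<alpha>) \<longlongrightarrow> 0) (at_right 0)"
    by (rule tendsto_zero_powrI) (auto intro!: tendsto_ident_at eventually_at_rightI[of 0 1] simp: assms)
  then have "\<forall>\<^sub>F e in at_right 0. e powr \<alpha> < 1 / r"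
    using assms(2) by (intro order_tendstoD(2)) auto
  moreover have "\<forall>\<^sub>F e in at_right 0. (0::real) < e \<and> e < 1"
    using eventually_at_right_real[of 0 1] by simp
  ultimately show ?thesis
    by eventually_elim (use assms(2) in \<open>auto simp: field_simps\<close>)
qed

theorem lemma2:
  fixes u X :: "real \<Rightarrow> real \<Rightarrow> (real \<Rightarrow>\<^sub>C real)"
    and v0 :: "real \<Rightarrow> (real \<Rightarrow>\<^sub>C real)"
    and phi :: "real \<Rightarrow> real"
    and alpha beta M1 :: real
  assumes u_per: "\<And>e t x. 0 < e \<Longrightarrow> e < 1 \<Longrightarrow> 0 \<le> t \<Longrightarrow> u e t (x + 2 * pi) = u e t x"
    and u_diff: "\<And>e t x. 0 < e \<Longrightarrow> e < 1 \<Longrightarrow> 0 \<le> t \<Longrightarrow> (\<lambda>y. u e t y) differentiable (at x)"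
    and u_cont: "\<And>e. 0 < e \<Longrightarrow> e < 1 \<Longrightarrow> continuous_on {0..} (u e)"
    and M1_pos: "M1 > 0"
    and u_bound: "\<And>e t x. 0 < e \<Longrightarrow> e < 1 \<Longrightarrow> 0 \<le> t \<Longrightarrow> \<bar>u e t x\<bar> \<le> M1"
    and v0_per: "\<And>e x. 0 < e \<Longrightarrow> e < 1 \<Longrightarrow> v0 e (x + 2 * pi) = v0 e x"
    and v0_L1: "\<exists>C. \<forall>e. 0 < e \<and> e < 1 \<longrightarrow> integral {-pi..pi} (\<lambda>x. \<bar>v0 e x\<bar>) \<le> C"
    and X_init: "\<And>e. 0 < e \<Longrightarrow> e < 1 \<Longrightarrow> X e 0 = v0 e"
    and X_ode: "\<And>e. 0 < e \<Longrightarrow> e < 1 \<Longrightarrow>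
       \<exists>X' :: real \<Rightarrow> (real \<Rightarrow>\<^sub>C real). continuous_on {0..} X' \<and>
         (\<forall>t \<ge> 0. (X e has_vector_derivative X' t) (at t within {0..}) \<and>
            (\<forall>x. X' t x = (1 / e) * (X e t (x - e) * max 0 (u e t (x - e))
                                     - X e t x * \<bar>u e t x\<bar>
                                     + X e t (x + e) * max 0 (- u e t (x + e)))))"
    and phi_smooth: "smooth_fun phi"
    and phi_supp: "compact_supp phi"
    and phi_int: "integral UNIV phi = 1"
    and alpha: "0 < alpha" "alpha \<le> 1"
    and beta: "0 < beta" "beta < alpha"
    and u_deriv_bound: "\<And>\<delta>. \<delta> > 0 \<Longrightarrow> \<exists>c. \<forall>e t x. 0 < e \<and> e < 1 \<and> 0 \<le> t \<and> t \<le> \<delta> \<longrightarrow>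
        \<bar>deriv (\<lambda>y. u e t y) x\<bar> \<le> c * e powr (- beta)"
  shows "\<forall>psi t. smooth_fun psi \<and> compact_supp psi \<and> 0 \<le> t \<longrightarrow>
    ((\<lambda>e. integral UNIV (\<lambda>x.
        vector_derivative (\<lambda>s. vfam X phi alpha e x s) (at t within {0..}) * psi x
        - u e t x * vfam X phi alpha e x t * deriv psi x)) \<longlongrightarrow> 0) (at_right 0)"
proof (intro allI impI)
  fix psi :: "real \<Rightarrow> real" and t :: real
  assume "smooth_fun psi \<and> compact_supp psi \<and> 0 \<le> t"
  then have psi: "smooth_fun psi" "compact_supp psi" and t: "0 \<le> t" by auto
  obtain R P1 P2 where pz: "\<And>x. R < \<bar>x\<bar> \<Longrightarrow> psi x = 0" and p1z: "\<And>x. R < \<bar>x\<bar> \<Longrightarrow> deriv psi x = 0"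
      and P1: "\<And>x. \<bar>deriv psi x\<bar> \<le> P1" and P2: "\<And>x. \<bar>deriv (deriv psi) x\<bar> \<le> P2"
    using smooth_compact_supp_bounds[OF psi] by metis
  obtain r Pm where kernel: "supported_kernel phi r" and Pm: "\<And>z. \<bar>phi z\<bar> \<le> Pm"
    using smooth_compact_supp_kernel[OF phi_smooth phi_supp] by metis
  then have r: "r > 0" by (simp add: supported_kernel_def)
  obtain c where c0: "\<forall>e t' x. 0 < e \<and> e < 1 \<and> 0 \<le> t' \<and> t' \<le> t + 1 \<longrightarrow>
      \<bar>deriv (\<lambda>y. u e t' y) x\<bar> \<le> c * e powr (- beta)"
    using u_deriv_bound[of "t + 1"] t by auto
  then have c: "\<bar>deriv (\<lambda>y. u e t y) x\<bar> \<le> max c 0 * e powr (- beta)" if "0 < e" "e < 1" for e x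
  proof -
    have "\<bar>deriv (\<lambda>y. u e t y) x\<bar> \<le> c * e powr (- beta)" using c0 that t by simp
    moreover have "c * e powr (- beta) \<le> max c 0 * e powr (- beta)" by (intro mult_right_mono) auto
    ultimately show ?thesis by linarith
  qed
  obtain C where C0: "\<forall>e. 0 < e \<and> e < 1 \<longrightarrow> integral {-pi..pi} (\<lambda>x. \<bar>v0 e x\<bar>) \<le> C"
    using v0_L1 by blast
  have C: "period_L1 (X e 0) \<le> max C 0" if "0 < e" "e < 1" for e
    using C0 that X_init[OF that] unfolding period_L1_def by (simp add: le_max_iff_disj)
  show "((\<lambda>e. integral UNIV (\<lambda>x.
      vector_derivative (\<lambda>s. vfam X phi alpha e x s) (at t within {0..}) * psi x
      - u e t x * vfam X phi alpha e x t * deriv psi x)) \<longlongrightarrow> 0) (at_right 0)"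
    (is "(?res \<longlongrightarrow> 0) _")
  proof (rule tendsto_zero_at_right_of_powr_bound)
    show "\<forall>\<^sub>F e in at_right 0. \<bar>?res e\<bar> \<le> (max c 0 * r * P1 * e powr (alpha - beta) + 2 * M1 * P2 * e)
        * (2 * r * Pm * (real (2 * nat \<lceil>R + 3\<rceil> + 1) * max C 0))"
      using eventually_at_right_powr_small[OF alpha(1) r]
    proof eventually_elim
      case (elim e)
      then have e: "0 < e" "e < 1" and ear: "e powr alpha * r \<le> 1" by auto
      obtain X' where X': "\<And>s. s \<ge> 0 \<Longrightarrow> (X e has_vector_derivative X' s) (at s within {0..}) \<and>
          (\<forall>x. X' s x = upwind e (u e s) (X e s) x)"
        using X_ode[OF e] unfolding upwind_def by blast
      interpret flow: upwind_flow e M1 "u e" "X e" X'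
        using e M1_pos u_bound u_per X' X_init v0_per by unfold_locales auto
      have "\<bar>?res e\<bar> \<le> (max c 0 * e powr (- beta) * e powr alpha * r * P1 + 2 * M1 * e * P2)
          * (2 * r * Pm) * (real (2 * nat \<lceil>R + 3\<rceil> + 1) * period_L1 (X e 0))"
        unfolding vfam_def
        by (rule flow.abs_integral_weak_residual_le_initial[OF kernel _ ear _ t _
            abs_diff_le_of_deriv_le[OF u_diff[OF e t] c[OF e]] smooth_fun_has_deriv[OF psi(1)]
            smooth_fun_has_deriv[OF smooth_fun_deriv[OF psi(1)]] P1 P2 pz p1z Pm]) (use e in auto)
      also have "\<dots> \<le> (max c 0 * e powr (- beta) * e powr alpha * r * P1 + 2 * M1 * e * P2)
          * (2 * r * Pm) * (real (2 * nat \<lceil>R + 3\<rceil> + 1) * max C 0)"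
        using C[OF e] kernel e M1_pos P1[of 0] P2[of 0] Pm[of 0]
        by (intro mult_left_mono) (auto simp: supported_kernel_def)
      also have "max c 0 * e powr (- beta) * e powr alpha = max c 0 * e powr (alpha - beta)"
        by (simp add: powr_add [symmetric])
      finally show ?case by (simp add: algebra_simps)
    qed
  qed (use beta in simp)
qed

end
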